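(* Let $(\Sigma_A^+,d,\sigma)$ be a subshift of finite type generated by a $k\times k$ incidence matrix $A$. Then for every $\alpha\ge0$: (1) for every $E\subset\Sigma_A^+$, $\dim_H(E,d)=\dfrac{h^{\alpha,B}_{top}(\sigma,E)}{1+\alpha}$, where $\dim_H(E,d)$ is the Hausdorff dimension of $E$ with respect to $d$; (2) $h^{\alpha,B}_{top}(\sigma,\Sigma_A^+)=h^\alpha_{top}(\sigma,\Sigma_A^+)=(1+\alpha)\log r(A)$, where $r(A)$ is the spectral radius of $A$. Consequently $\dim_H(\Sigma_A^+,d)=\log r(A)$.
   Context: $\Sigma_k^+=\{0,\dots,k-1\}^{\mathbb N}$ (coordinates $x=(x_0,x_1,\dots)$) with metric $d(x,y)=e^{-n(x,y)}$, where $n(x,y)$ is the first index at which $x$ and $y$ disagree ($n(x,x)=\infty$); $\sigma$ is the left shift. $A$ is a $k\times k$ matrix with entries in $\{0,1\}$, each row containing at least one $1$, and $\Sigma_A^+=\{x\in\Sigma_k^+: A_{x_n,x_{n+1}}=1\ \forall n\}$ with $\sigma$ restricted to it. For a TDS $(X,d,f)$ (compact metric space, continuous map), $d_n^\alpha(x,y)=\max_{0\le i\le n-1}e^{\alpha i}d(f^ix,f^iy)$, $B_n^\alpha(x,\varepsilon)=\{y: d_n^\alpha(x,y)<\varepsilon\}$. $\alpha$-Bowen topological entropy of $K\subset X$: $M^\alpha(K,s,\varepsilon,n)=\inf\sum_i e^{-sn_i}$ over finite or countable families $\{B^\alpha_{n_i}(x_i,\varepsilon)\}$ with $n_i\ge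 n$ covering $K$; $M^\alpha(K,s,\varepsilon)=\lim_n M^\alpha(K,s,\varepsilon,n)$; $M^\alpha(K,\varepsilon)=\inf\{s: M^\alpha(K,s,\varepsilon)=0\}$; $h^{\alpha,B}_{top}(f,K)=\lim_{\varepsilon\to0}M^\alpha(K,\varepsilon)$. $\alpha$-topological entropy: a set $E\subset X$ is $(n,\alpha,\varepsilon)$-spanning if every $x\in X$ has $y\in E$ with $d_n^\alpha(x,y)<\varepsilon$; $r_n(f,\alpha,X,\varepsilon)$ is the minimal cardinality of such a set; $h^\alpha_{top}(f,X)=\lim_{\varepsilon\to0}\limsup_{n\to\infty}\frac1n\log r_n(f,\alpha,X,\varepsilon)$. *)

theory Defs
  imports "Jordan_Normal_Form.Spectral_Radius"
          "HOL-Library.Extended_Real"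
          "HOL-Library.Extended_Nonnegative_Real"
          "HOL-Library.Liminf_Limsup"
begin

type_synonym seq = "nat \<Rightarrow> nat"

definition full_shift :: "nat \<Rightarrow> seq set" where
  "full_shift k = {x. \<forall>n. x n < k}"

definition SFT :: "nat \<Rightarrow> nat mat \<Rightarrow> seq set" where
  "SFT k A = {x \<in> full_shift k. \<forall>n. A $$ (x n, x (Suc n)) = 1}"

definition shift :: "seq \<Rightarrow> seq" where
  "shift x = (\<lambda>j. x (Suc j))"

definition sdist :: "seq \<Rightarrow> seq \<Rightarrow> real" where
  "sdist x y = (if x = y then 0 else exp (- real (LEAST n. x n \<noteq> y n)))"

text \<open>alpha-Bowen metric; for n = 0 the (empty) maximum is taken to be 0.\<close>
definition bowen_dist :: "real \<Rightarrow> nat \<Rightarrow> seq \<Rightarrow> seq \<Rightarrow> real" where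
  "bowen_dist \<alpha> n x y =
     Max (insert 0 ((\<lambda>i. exp (\<alpha> * real i) * sdist ((shift ^^ i) x) ((shift ^^ i) y)) ` {..<n}))"

definition bowen_ball :: "seq set \<Rightarrow> real \<Rightarrow> nat \<Rightarrow> seq \<Rightarrow> real \<Rightarrow> seq set" where
  "bowen_ball X \<alpha> n x \<epsilon> = {y \<in> X. bowen_dist \<alpha> n x y < \<epsilon>}"

text \<open>M^alpha(K,s,eps,N): infimum over finite or countable families of Bowen balls
  (indexed by a set I of naturals, centres in X) with n_i >= N covering K.\<close>
definition bowenM_N :: "seq set \<Rightarrow> real \<Rightarrow> seq set \<Rightarrow> real \<Rightarrow> real \<Rightarrow> nat \<Rightarrow> ennreal" where
  "bowenM_N X \<alpha> K s \<epsilon> N =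
     (INF (I, c, m) \<in> {(I, c, m). (\<forall>i\<in>I. c i \<in> X \<and> m i \<ge> N) \<and>
                          K \<subseteq> (\<Union>i\<in>I. bowen_ball X \<alpha> (m i) (c i) \<epsilon>)}.
        (\<Sum>i. if i \<in> I then ennreal (exp (- s * real (m i))) else 0))"

definition bowenM :: "seq set \<Rightarrow> real \<Rightarrow> seq set \<Rightarrow> real \<Rightarrow> real \<Rightarrow> ennreal" where
  "bowenM X \<alpha> K s \<epsilon> = lim (\<lambda>N. bowenM_N X \<alpha> K s \<epsilon> N)"

text \<open>Critical value; s ranges over nonnegative reals (value \<infinity> if no such s).\<close>
definition bowen_crit :: "seq set \<Rightarrow> real \<Rightarrow> seq set \<Rightarrow> real \<Rightarrow> ereal" where
  "bowen_crit X \<alpha> K \<epsilon> = Inf {ereal s | s. 0 \<le> s \<and> bowenM X \<alpha> K s \<epsilon> = 0}"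

definition bowen_entropy :: "seq set \<Rightarrow> real \<Rightarrow> seq set \<Rightarrow> ereal" where
  "bowen_entropy X \<alpha> K = Lim (at_right 0) (\<lambda>\<epsilon>. bowen_crit X \<alpha> K \<epsilon>)"

definition spanning :: "seq set \<Rightarrow> real \<Rightarrow> nat \<Rightarrow> real \<Rightarrow> seq set \<Rightarrow> bool" where
  "spanning X \<alpha> n \<epsilon> E \<longleftrightarrow> E \<subseteq> X \<and> (\<forall>x\<in>X. \<exists>y\<in>E. bowen_dist \<alpha> n x y < \<epsilon>)"

definition span_num :: "seq set \<Rightarrow> real \<Rightarrow> nat \<Rightarrow> real \<Rightarrow> nat" where
  "span_num X \<alpha> n \<epsilon> = Inf {card E | E. finite E \<and> spanning X \<alpha> n \<epsilon> E}"

definition alpha_entropy :: "seq set \<Rightarrow> real \<Rightarrow> ereal" where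
  "alpha_entropy X \<alpha> = Lim (at_right 0)
     (\<lambda>\<epsilon>. limsup (\<lambda>n. ereal (ln (real (span_num X \<alpha> n \<epsilon>)) / real n)))"

definition sdiam :: "seq set \<Rightarrow> real" where
  "sdiam U = (if U = {} then 0 else Sup {sdist x y | x y. x \<in> U \<and> y \<in> U})"

definition hausdorff_pre :: "real \<Rightarrow> real \<Rightarrow> seq set \<Rightarrow> ennreal" where
  "hausdorff_pre s \<delta> E =
     (INF U \<in> {U :: nat \<Rightarrow> seq set. E \<subseteq> (\<Union>i. U i) \<and> (\<forall>i. sdiam (U i) \<le> \<delta>)}.
        (\<Sum>i. ennreal (sdiam (U i) powr s)))"

definition hausdorff_measure :: "real \<Rightarrow> seq set \<Rightarrow> ennreal" where
  "hausdorff_measure s E = Lim (at_right 0) (\<lambda>\<delta>. hausdorff_pre s \<delta> E)"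

definition hausdorff_dim :: "seq set \<Rightarrow> ereal" where
  "hausdorff_dim E = Inf {ereal s | s. 0 < s \<and> hausdorff_measure s E = 0}"

end

theory Submission
  imports Defs
    "HOL-Analysis.Function_Topology"
    "HOL-Analysis.Extended_Real_Limits"
    "HOL-Real_Asymp.Real_Asymp"
begin

text \<open>For \<open>\<epsilon> \<le> 1\<close> the \<open>\<alpha>\<close>-Bowen ball \<open>B\<^sub>n\<^sup>\<alpha>(x, \<epsilon>)\<close> in \<open>\<Sigma>\<^sub>A\<^sup>+\<close> is the cylinder of \<open>x\<close>
  of length \<open>\<ell>(n) = n + \<lfloor>-ln \<epsilon> + \<alpha> (n - 1)\<rfloor> = (1 + \<alpha>) n + O(1)\<close>, and a cylinder of length
  \<open>m\<close> has diameter at most \<open>e\<^sup>-\<^sup>m\<close>. Hence covers by Bowen balls weighted by \<open>e\<^sup>-\<^sup>s\<^sup>n\<close>, covers by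
  cylinders weighted by \<open>e\<^sup>-\<^sup>t\<^sup>m\<close> and covers by small sets weighted by \<open>diam\<^sup>t\<close> have vanishing
  infimum simultaneously when \<open>s = (1 + \<alpha>) t\<close>, which gives \<open>h\<^sup>\<alpha>\<^sup>,\<^sup>B(\<sigma>, E) = (1 + \<alpha>) dim\<^sub>H E\<close>.

  The number of admissible words of length \<open>L + 1\<close> is the sum of the entries of \<open>A\<^sup>L\<close>, which lies
  between \<open>r(A)\<^sup>L\<close> and \<open>C (1 + L)\<^sup>k\<^sup>-\<^sup>1 r(A)\<^sup>L\<close> by the Jordan normal form. Counting the words of
  length \<open>\<ell>(n)\<close> gives the \<open>\<alpha>\<close>-entropy \<open>(1 + \<alpha>) ln r(A)\<close>. Covering \<open>\<Sigma>\<^sub>A\<^sup>+\<close> by all cylinders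
  of one length gives \<open>dim\<^sub>H \<Sigma>\<^sub>A\<^sup>+ \<le> ln r(A)\<close>; conversely, by compactness every cylinder cover has
  a finite subcover, and a Kraft-type inequality shows that its \<open>t\<close>-weight is at least \<open>1\<close> when
  \<open>t < ln r(A)\<close>.\<close>

section \<open>Bowen balls and cylinders\<close>

definition cylinder :: "seq \<Rightarrow> nat \<Rightarrow> seq set" where
  "cylinder c L = {y. \<forall>j<L. y j = c j}"

lemma funpow_shift: "(shift ^^ i) x = (\<lambda>j. x (i + j))"
  by (induction i arbitrary: x) (auto simp: shift_def)

lemma sdist_eq_exp_first_difference:
  assumes "x \<noteq> y"
  obtains p where "sdist x y = exp (- real p)" "x p \<noteq> y p" "\<And>j. j < p \<Longrightarrow> x j = y j"
proof -
  obtain n where n: "x n \<noteq> y n" using assms by auto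
  define p where "p = (LEAST n. x n \<noteq> y n)"
  have "x p \<noteq> y p" unfolding p_def by (rule LeastI[of _ n]) (rule n)
  moreover have "\<And>j. j < p \<Longrightarrow> x j = y j" unfolding p_def using not_less_Least by blast
  moreover have "sdist x y = exp (- real p)" using assms by (simp add: sdist_def p_def)
  ultimately show ?thesis using that by blast
qed

lemma sdist_less_exp_iff: "sdist x y < exp (- a) \<longleftrightarrow> (\<forall>j. real j \<le> a \<longrightarrow> x j = y j)"
proof (cases "x = y")
  case False
  then obtain p where p: "sdist x y = exp (- real p)" "x p \<noteq> y p" "\<And>j. j < p \<Longrightarrow> x j = y j"
    using sdist_eq_exp_first_difference by blast
  have "sdist x y < exp (- a) \<longleftrightarrow> a < real p" using p(1) by simp
  also have "\<dots> \<longleftrightarrow> (\<forall>j. real j \<le> a \<longrightarrow> x j = y j)"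
  proof
    assume "a < real p" then show "\<forall>j. real j \<le> a \<longrightarrow> x j = y j" using p(3) by auto
  next
    assume "\<forall>j. real j \<le> a \<longrightarrow> x j = y j" then show "a < real p" using p(2) by (meson not_le)
  qed
  finally show ?thesis .
qed (simp add: sdist_def)

lemma sdist_le_exp_iff: "sdist x y \<le> exp (- real p) \<longleftrightarrow> (\<forall>j<p. x j = y j)"
proof (cases "x = y")
  case False
  then obtain q where q: "sdist x y = exp (- real q)" "x q \<noteq> y q" "\<And>j. j < q \<Longrightarrow> x j = y j"
    using sdist_eq_exp_first_difference by blast
  have "sdist x y \<le> exp (- real p) \<longleftrightarrow> p \<le> q" using q(1) by simp
  also have "\<dots> \<longleftrightarrow> (\<forall>j<p. x j = y j)" using q(2,3) by (meson le_less_trans not_le)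
  finally show ?thesis .
qed (simp add: sdist_def)

lemma bowen_dist_less_iff_agree:
  assumes "\<epsilon> > 0"
  shows "bowen_dist \<alpha> n x y < \<epsilon> \<longleftrightarrow>
     (\<forall>i<n. \<forall>j. real j \<le> - ln \<epsilon> + \<alpha> * real i \<longrightarrow> x (i + j) = y (i + j))"
proof -
  have scale: "exp (\<alpha> * real i) * d < \<epsilon> \<longleftrightarrow> d < exp (- (- ln \<epsilon> + \<alpha> * real i))" for i d
  proof -
    have "exp (- (- ln \<epsilon> + \<alpha> * real i)) = \<epsilon> / exp (\<alpha> * real i)"
      using assms by (simp add: exp_diff exp_minus field_simps)
    then show ?thesis using pos_less_divide_eq[of "exp (\<alpha> * real i)" d \<epsilon>] by (simp add: mult.commute)
  qed
  have "bowen_dist \<alpha> n x y < \<epsilon> \<longleftrightarrow>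
      (\<forall>i<n. exp (\<alpha> * real i) * sdist ((shift ^^ i) x) ((shift ^^ i) y) < \<epsilon>)"
    unfolding bowen_dist_def using assms by (subst Max_less_iff) auto
  then show ?thesis unfolding scale sdist_less_exp_iff funpow_shift by simp
qed

text \<open>For \<open>\<epsilon> \<le> 1\<close> this is the length of the cylinder \<open>B\<^sub>n\<^sup>\<alpha>(x, \<epsilon>)\<close>: the constraint at
  time \<open>n - 1\<close> reaches furthest.\<close>

definition bowen_length :: "real \<Rightarrow> real \<Rightarrow> nat \<Rightarrow> nat" where
  "bowen_length \<alpha> \<epsilon> n = (if n = 0 then 0 else n + nat \<lfloor>- ln \<epsilon> + \<alpha> * real (n - 1)\<rfloor>)"

lemma agree_iff_agree_upto_bowen_length:
  assumes "0 < \<epsilon>" "\<epsilon> \<le> 1" "\<alpha> \<ge> 0"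
  shows "(\<forall>i<n. \<forall>j. real j \<le> - ln \<epsilon> + \<alpha> * real i \<longrightarrow> x (i + j) = y (i + j))
     \<longleftrightarrow> (\<forall>q < bowen_length \<alpha> \<epsilon> n. x q = y q)"
proof
  assume H: "\<forall>i<n. \<forall>j. real j \<le> - ln \<epsilon> + \<alpha> * real i \<longrightarrow> x (i + j) = y (i + j)"
  show "\<forall>q < bowen_length \<alpha> \<epsilon> n. x q = y q"
  proof (intro allI impI)
    fix q assume q: "q < bowen_length \<alpha> \<epsilon> n"
    then have n: "n \<noteq> 0" by (auto simp: bowen_length_def split: if_splits)
    have "ln \<epsilon> \<le> 0" "\<alpha> * real (n - 1) \<ge> 0" using assms by simp_all
    then have a0: "- ln \<epsilon> + \<alpha> * real (n - 1) \<ge> 0" by linarith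
    show "x q = y q"
    proof (cases "q < n")
      case True
      have "\<alpha> * real q \<ge> 0" using assms by simp
      then have "real 0 \<le> - ln \<epsilon> + \<alpha> * real q" using \<open>ln \<epsilon> \<le> 0\<close> by simp
      from H[rule_format, OF True this] show ?thesis by simp
    next
      case False
      then have "q = (n - 1) + (q - (n - 1))" and "n - 1 < n" using n by auto
      moreover have "real (q - (n - 1)) \<le> - ln \<epsilon> + \<alpha> * real (n - 1)"
      proof -
        have "q - (n - 1) \<le> nat \<lfloor>- ln \<epsilon> + \<alpha> * real (n - 1)\<rfloor>"
          using q n unfolding bowen_length_def by simp
        then have "real (q - (n - 1)) \<le> of_int \<lfloor>- ln \<epsilon> + \<alpha> * real (n - 1)\<rfloor>"
          using a0 by linarith
        then show ?thesis by linarith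
      qed
      ultimately show ?thesis using H by metis
    qed
  qed
next
  assume H: "\<forall>q < bowen_length \<alpha> \<epsilon> n. x q = y q"
  show "\<forall>i<n. \<forall>j. real j \<le> - ln \<epsilon> + \<alpha> * real i \<longrightarrow> x (i + j) = y (i + j)"
  proof (intro allI impI)
    fix i j assume i: "i < n" and j: "real j \<le> - ln \<epsilon> + \<alpha> * real i"
    have "\<alpha> * real i \<le> \<alpha> * real (n - 1)" using i assms(3) by (intro mult_left_mono) auto
    then have "int j \<le> \<lfloor>- ln \<epsilon> + \<alpha> * real (n - 1)\<rfloor>" using j by (simp add: le_floor_iff)
    then have "i + j < bowen_length \<alpha> \<epsilon> n" using i unfolding bowen_length_def by auto
    then show "x (i + j) = y (i + j)" using H by blast
  qed
qed

lemma bowen_dist_less_iff: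
  assumes "0 < \<epsilon>" "\<epsilon> \<le> 1" "\<alpha> \<ge> 0"
  shows "bowen_dist \<alpha> n x y < \<epsilon> \<longleftrightarrow> (\<forall>q < bowen_length \<alpha> \<epsilon> n. x q = y q)"
  by (simp only: bowen_dist_less_iff_agree[OF assms(1)] agree_iff_agree_upto_bowen_length[OF assms])

lemma bowen_ball_eq_cylinder:
  assumes "0 < \<epsilon>" "\<epsilon> \<le> 1" "\<alpha> \<ge> 0"
  shows "bowen_ball X \<alpha> n c \<epsilon> = X \<inter> cylinder c (bowen_length \<alpha> \<epsilon> n)"
  unfolding bowen_ball_def cylinder_def bowen_dist_less_iff[OF assms] by (auto simp: eq_commute)

lemma bowen_length_ge: "bowen_length \<alpha> \<epsilon> n \<ge> n"
  by (simp add: bowen_length_def)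

lemma bowen_length_bounds:
  assumes "n \<ge> 1" "0 < \<epsilon>" "\<epsilon> \<le> 1" "\<alpha> \<ge> 0"
  shows "real (bowen_length \<alpha> \<epsilon> n) \<le> (1 + \<alpha>) * real n + (- ln \<epsilon> - \<alpha>)"
    and "real (bowen_length \<alpha> \<epsilon> n) > (1 + \<alpha>) * real n + (- ln \<epsilon> - \<alpha>) - 1"
proof -
  have "ln \<epsilon> \<le> 0" "\<alpha> * real (n - 1) \<ge> 0" using assms by simp_all
  then have "- ln \<epsilon> + \<alpha> * real (n - 1) \<ge> 0" by linarith
  then have e: "real (bowen_length \<alpha> \<epsilon> n) = real n + of_int \<lfloor>- ln \<epsilon> + \<alpha> * real (n - 1)\<rfloor>"
    using assms by (simp add: bowen_length_def)
  have r: "\<alpha> * real (n - 1) = \<alpha> * real n - \<alpha>" using assms by (simp add: algebra_simps)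
  show "real (bowen_length \<alpha> \<epsilon> n) \<le> (1 + \<alpha>) * real n + (- ln \<epsilon> - \<alpha>)"
    unfolding e using r of_int_floor_le[of "- ln \<epsilon> + \<alpha> * real (n - 1)"] by (simp add: algebra_simps)
  show "real (bowen_length \<alpha> \<epsilon> n) > (1 + \<alpha>) * real n + (- ln \<epsilon> - \<alpha>) - 1"
    unfolding e using r real_of_int_floor_gt_diff_one[of "- ln \<epsilon> + \<alpha> * real (n - 1)"]
    by (simp add: algebra_simps)
qed

lemma bowen_length_at_top: "filterlim (bowen_length \<alpha> \<epsilon>) at_top sequentially"
  by (rule filterlim_at_top_mono[OF filterlim_ident]) (simp add: bowen_length_ge)

lemma bowen_length_div_tendsto:
  assumes "0 < \<epsilon>" "\<epsilon> \<le> 1" "\<alpha> \<ge> 0"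
  shows "(\<lambda>n. real (bowen_length \<alpha> \<epsilon> n) / real n) \<longlonglongrightarrow> 1 + \<alpha>"
proof (rule tendsto_sandwich)
  define b where "b = - ln \<epsilon> - \<alpha>"
  show "eventually (\<lambda>n. ((1 + \<alpha>) * real n + b - 1) / real n \<le> real (bowen_length \<alpha> \<epsilon> n) / real n) sequentially"
    using bowen_length_bounds(2)[OF _ assms] unfolding b_def
    by (intro eventually_sequentiallyI[of 1] divide_right_mono) (auto simp: less_imp_le)
  show "eventually (\<lambda>n. real (bowen_length \<alpha> \<epsilon> n) / real n \<le> ((1 + \<alpha>) * real n + b) / real n) sequentially"
    using bowen_length_bounds(1)[OF _ assms] unfolding b_def
    by (intro eventually_sequentiallyI[of 1] divide_right_mono) auto
  show "(\<lambda>n. ((1 + \<alpha>) * real n + b - 1) / real n) \<longlonglongrightarrow> 1 + \<alpha>" by real_asymp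
  show "(\<lambda>n. ((1 + \<alpha>) * real n + b) / real n) \<longlonglongrightarrow> 1 + \<alpha>" by real_asymp
qed

text \<open>A family \<open>(I, c, m)\<close> describes the Bowen balls or cylinders with centre \<open>c i\<close> and
  time or length \<open>m i\<close>, \<open>i \<in> I\<close>; countable families are indexed by sets of naturals.\<close>

type_synonym ball_family = "nat set \<times> (nat \<Rightarrow> seq) \<times> (nat \<Rightarrow> nat)"

definition family_weight :: "real \<Rightarrow> ball_family \<Rightarrow> ennreal" where
  "family_weight t = (\<lambda>(I, c, m). \<Sum>i. if i \<in> I then ennreal (exp (- t * real (m i))) else 0)"

definition bowen_covers :: "seq set \<Rightarrow> real \<Rightarrow> seq set \<Rightarrow> real \<Rightarrow> nat \<Rightarrow> ball_family set" where
  "bowen_covers X \<alpha> K \<epsilon> N = {(I, c, m). (\<forall>i\<in>I. c i \<in> X \<and> m i \<ge> N) \<and>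
                                K \<subseteq> (\<Union>i\<in>I. bowen_ball X \<alpha> (m i) (c i) \<epsilon>)}"

definition cylinder_covers :: "seq set \<Rightarrow> seq set \<Rightarrow> nat \<Rightarrow> ball_family set" where
  "cylinder_covers X K L =
     {(I, c, m). (\<forall>i\<in>I. c i \<in> X \<and> m i \<ge> L) \<and> K \<subseteq> (\<Union>i\<in>I. cylinder (c i) (m i))}"

definition cylinder_content :: "seq set \<Rightarrow> seq set \<Rightarrow> real \<Rightarrow> nat \<Rightarrow> ennreal" where
  "cylinder_content X K t L = (INF p\<in>cylinder_covers X K L. family_weight t p)"

lemma bowenM_N_eq_INF: "bowenM_N X \<alpha> K s \<epsilon> N = (INF p\<in>bowen_covers X \<alpha> K \<epsilon> N. family_weight s p)"
  unfolding bowenM_N_def bowen_covers_def family_weight_def by simp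

lemma family_weight_le:
  assumes "\<And>i. i \<in> I \<Longrightarrow> exp (- t * real (m i)) \<le> D * exp (- s * real (m' i))" "D \<ge> 0"
  shows "family_weight t (I, c, m) \<le> ennreal D * family_weight s (I, c', m')"
proof -
  have "family_weight t (I, c, m)
      \<le> (\<Sum>i. ennreal D * (if i \<in> I then ennreal (exp (- s * real (m' i))) else 0))"
    unfolding family_weight_def prod.case
    by (rule suminf_le[OF _ summableI summableI])
       (use assms in \<open>auto simp: ennreal_mult[symmetric] intro: ennreal_leI\<close>)
  also have "\<dots> = ennreal D * family_weight s (I, c', m')"
    unfolding family_weight_def by simp
  finally show ?thesis .
qed

lemma ennreal_INF_eq_0_iff:
  "(INF x\<in>S. f x) = (0::ennreal) \<longleftrightarrow> (\<forall>e>0. \<exists>x\<in>S. f x < ennreal e)"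
proof -
  have "(\<forall>y>0. \<exists>x\<in>S. f x < y) \<longleftrightarrow> (\<forall>e>0. \<exists>x\<in>S. f x < ennreal e)"
  proof safe
    fix y :: ennreal assume H: "\<forall>e>0. \<exists>x\<in>S. f x < ennreal e" and y: "y > 0"
    obtain e where e: "e > 0" "ennreal e \<le> y"
    proof (cases y rule: ennreal_cases)
      case (real r) then show ?thesis using y that by auto
    next
      case top then show ?thesis using that[of 1] by auto
    qed
    then show "\<exists>x\<in>S. f x < y" using H by (meson less_le_trans)
  qed auto
  then show ?thesis using INF_eq_bot_iff[of f S] by (simp add: bot_ennreal)
qed

lemma INF_eq_0_transfer:
  assumes "(INF x\<in>S. f x) = (0::ennreal)" "D > 0"
    and "\<And>x. x \<in> S \<Longrightarrow> \<exists>y\<in>T. g y \<le> ennreal D * f x"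
  shows "(INF y\<in>T. g y) = 0"
  unfolding ennreal_INF_eq_0_iff
proof (intro allI impI)
  fix e :: real assume e: "e > 0"
  then have "e / D > 0" using assms(2) by simp
  then obtain x where x: "x \<in> S" "f x < ennreal (e / D)"
    using assms(1) unfolding ennreal_INF_eq_0_iff by blast
  obtain y where y: "y \<in> T" "g y \<le> ennreal D * f x" using assms(3)[OF x(1)] by auto
  have "ennreal D * f x < ennreal D * ennreal (e / D)"
    using x(2) assms(2) by (intro ennreal_mult_strict_left_mono) auto
  also have "\<dots> = ennreal e" using assms(2) e by (simp add: ennreal_mult[symmetric])
  finally show "\<exists>y\<in>T. g y < ennreal e" using y by (auto intro: le_less_trans)
qed

text \<open>Since \<open>bowen_length \<alpha> \<epsilon> n = (1 + \<alpha>) n + O(1)\<close>, the weight \<open>e\<^sup>-\<^sup>s\<^sup>n\<close> of a Bowen ball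
  and the weight \<open>e\<^sup>-\<^sup>t\<^sup>\<ell>\<close> of the corresponding cylinder, \<open>s = (1 + \<alpha>) t\<close>, agree up to
  constant factors, in both directions.\<close>

lemma exp_bowen_length_le:
  assumes "0 < \<epsilon>" "\<epsilon> \<le> 1" "\<alpha> \<ge> 0" "s \<ge> 0"
  obtains D where "D > 0"
    "\<And>n. exp (- (s / (1 + \<alpha>)) * real (bowen_length \<alpha> \<epsilon> n)) \<le> D * exp (- s * real n)"
proof -
  define t where "t = s / (1 + \<alpha>)"
  define b where "b = - ln \<epsilon> - \<alpha>"
  define D where "D = max 1 (exp (- t * (b - 1)))"
  have t0: "t \<ge> 0" and ts: "t * (1 + \<alpha>) = s" using assms unfolding t_def by simp_all
  have "exp (- t * real (bowen_length \<alpha> \<epsilon> n)) \<le> D * exp (- s * real n)" for n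
  proof (cases "n = 0")
    case True then show ?thesis by (simp add: bowen_length_def D_def)
  next
    case False
    have "real (bowen_length \<alpha> \<epsilon> n) > (1 + \<alpha>) * real n + b - 1"
      using bowen_length_bounds(2)[of n \<epsilon> \<alpha>] False assms unfolding b_def by simp
    then have "t * real (bowen_length \<alpha> \<epsilon> n) \<ge> t * ((1 + \<alpha>) * real n + b - 1)"
      using t0 by (intro mult_left_mono) auto
    also have "t * ((1 + \<alpha>) * real n + b - 1) = s * real n + t * (b - 1)"
      unfolding ts[symmetric] by (simp add: algebra_simps)
    finally have "exp (- t * real (bowen_length \<alpha> \<epsilon> n)) \<le> exp (- t * (b - 1)) * exp (- s * real n)"
      by (simp add: exp_add[symmetric])
    also have "\<dots> \<le> D * exp (- s * real n)" unfolding D_def by (intro mult_right_mono) auto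
    finally show ?thesis .
  qed
  moreover have "D > 0" unfolding D_def by simp
  ultimately show ?thesis using that[of D] unfolding t_def by blast
qed

lemma bowen_length_right_inverse:
  assumes "0 < \<epsilon>" "\<epsilon> \<le> 1" "\<alpha> \<ge> 0" "s \<ge> 0"
  obtains L D and \<tau> :: "nat \<Rightarrow> nat" where "D > 0"
    "\<And>l. L \<le> l \<Longrightarrow> N \<le> \<tau> l" "\<And>l. L \<le> l \<Longrightarrow> bowen_length \<alpha> \<epsilon> (\<tau> l) \<le> l"
    "\<And>l. L \<le> l \<Longrightarrow> exp (- s * real (\<tau> l)) \<le> D * exp (- (s / (1 + \<alpha>)) * real l)"
proof -
  define t where "t = s / (1 + \<alpha>)"
  define b where "b = - ln \<epsilon> - \<alpha>"
  define L where "L = nat \<lceil>(1 + \<alpha>) * (real N + 1) + \<bar>b\<bar>\<rceil>"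
  define D where "D = exp (s + t * b)"
  define x where "x l = (real l - b) / (1 + \<alpha>)" for l
  define \<tau> where "\<tau> l = nat \<lfloor>x l\<rfloor>" for l
  have a1: "1 + \<alpha> > 0" using assms by simp
  have x: "real N + 1 \<le> x l" if "L \<le> l" for l
  proof -
    have "(1 + \<alpha>) * (real N + 1) \<le> real l - b" using that unfolding L_def by linarith
    then show ?thesis unfolding x_def using a1 by (simp add: field_simps)
  qed
  have \<tau>: "real (\<tau> l) \<le> x l" "x l - 1 < real (\<tau> l)" "N \<le> \<tau> l" "1 \<le> \<tau> l" if "L \<le> l" for l
  proof -
    have "real (\<tau> l) = of_int \<lfloor>x l\<rfloor>" unfolding \<tau>_def using x[OF that] by simp
    then show "real (\<tau> l) \<le> x l" "x l - 1 < real (\<tau> l)" by linarith+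
    then show "N \<le> \<tau> l" "1 \<le> \<tau> l" using x[OF that] by linarith+
  qed
  have "bowen_length \<alpha> \<epsilon> (\<tau> l) \<le> l" if "L \<le> l" for l
  proof -
    have "real (bowen_length \<alpha> \<epsilon> (\<tau> l)) \<le> (1 + \<alpha>) * real (\<tau> l) + b"
      using bowen_length_bounds(1)[OF \<tau>(4)[OF that] assms(1-3)] unfolding b_def .
    also have "\<dots> \<le> (1 + \<alpha>) * x l + b" using \<tau>(1)[OF that] a1 by simp
    also have "\<dots> = real l" unfolding x_def using a1 by simp
    finally show ?thesis by simp
  qed
  moreover have "exp (- s * real (\<tau> l)) \<le> D * exp (- t * real l)" if "L \<le> l" for l
  proof -
    have "s * (x l - 1) \<le> s * real (\<tau> l)" using \<tau>(2)[OF that] assms(4) by (intro mult_left_mono) auto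
    moreover have "s * (x l - 1) = t * (real l - b) - s"
      unfolding t_def x_def by (simp add: right_diff_distrib diff_divide_distrib)
    ultimately have "- s * real (\<tau> l) \<le> (s + t * b) + - t * real l" by (simp add: algebra_simps)
    then show ?thesis unfolding D_def by (simp flip: exp_add)
  qed
  moreover have "D > 0" unfolding D_def by simp
  ultimately show ?thesis using that[of D L \<tau>] \<tau>(3) unfolding t_def by blast
qed

lemma bowenM_N_eq_0_imp_cylinder_content_eq_0:
  assumes "0 < \<epsilon>" "\<epsilon> \<le> 1" "\<alpha> \<ge> 0" "s \<ge> 0"
    and "bowenM_N X \<alpha> K s \<epsilon> N = 0"
  shows "cylinder_content X K (s / (1 + \<alpha>)) N = 0"
proof -
  obtain D where D: "D > 0"
    "\<And>n. exp (- (s / (1 + \<alpha>)) * real (bowen_length \<alpha> \<epsilon> n)) \<le> D * exp (- s * real n)"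
    by (rule exp_bowen_length_le[OF assms(1-4)]) blast
  show ?thesis unfolding cylinder_content_def
  proof (rule INF_eq_0_transfer[OF _ D(1)])
    show "(INF p\<in>bowen_covers X \<alpha> K \<epsilon> N. family_weight s p) = 0"
      using assms(5) by (simp add: bowenM_N_eq_INF)
    fix p assume p: "p \<in> bowen_covers X \<alpha> K \<epsilon> N"
    obtain I c m where pe: "p = (I, c, m)" by (cases p) auto
    have "(I, c, \<lambda>i. bowen_length \<alpha> \<epsilon> (m i)) \<in> cylinder_covers X K N"
      using p bowen_length_ge[of "m _" \<alpha> \<epsilon>]
      unfolding pe bowen_covers_def cylinder_covers_def bowen_ball_eq_cylinder[OF assms(1-3)]
      by (force intro: le_trans)
    moreover have "family_weight (s / (1 + \<alpha>)) (I, c, \<lambda>i. bowen_length \<alpha> \<epsilon> (m i))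
        \<le> ennreal D * family_weight s (I, c, m)"
      by (rule family_weight_le) (use D in auto)
    ultimately show "\<exists>y\<in>cylinder_covers X K N. family_weight (s / (1 + \<alpha>)) y
        \<le> ennreal D * family_weight s p" unfolding pe by blast
  qed
qed

lemma cylinder_content_eq_0_imp_bowenM_N_eq_0:
  assumes "0 < \<epsilon>" "\<epsilon> \<le> 1" "\<alpha> \<ge> 0" "s \<ge> 0" "K \<subseteq> X"
    and "\<forall>L. cylinder_content X K (s / (1 + \<alpha>)) L = 0"
  shows "bowenM_N X \<alpha> K s \<epsilon> N = 0"
proof -
  obtain L D and \<tau> :: "nat \<Rightarrow> nat" where D: "D > 0"
    and \<tau>: "\<And>l. L \<le> l \<Longrightarrow> N \<le> \<tau> l" "\<And>l. L \<le> l \<Longrightarrow> bowen_length \<alpha> \<epsilon> (\<tau> l) \<le> l"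
      "\<And>l. L \<le> l \<Longrightarrow> exp (- s * real (\<tau> l)) \<le> D * exp (- (s / (1 + \<alpha>)) * real l)"
    by (rule bowen_length_right_inverse[OF assms(1-4)]) blast
  show ?thesis unfolding bowenM_N_eq_INF
  proof (rule INF_eq_0_transfer[OF _ D])
    show "(INF p\<in>cylinder_covers X K L. family_weight (s / (1 + \<alpha>)) p) = 0"
      using assms(6) unfolding cylinder_content_def by simp
    fix p assume p: "p \<in> cylinder_covers X K L"
    obtain I c m where pe: "p = (I, c, m)" by (cases p) auto
    have mL: "\<And>i. i \<in> I \<Longrightarrow> L \<le> m i" using p unfolding pe cylinder_covers_def by auto
    have "K \<subseteq> (\<Union>i\<in>I. bowen_ball X \<alpha> (\<tau> (m i)) (c i) \<epsilon>)"
    proof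
      fix x assume x: "x \<in> K"
      then obtain i where i: "i \<in> I" "x \<in> cylinder (c i) (m i)"
        using p unfolding pe cylinder_covers_def by auto
      then have "x \<in> cylinder (c i) (bowen_length \<alpha> \<epsilon> (\<tau> (m i)))"
        using \<tau>(2)[OF mL[OF i(1)]] unfolding cylinder_def by auto
      then show "x \<in> (\<Union>i\<in>I. bowen_ball X \<alpha> (\<tau> (m i)) (c i) \<epsilon>)"
        using i x assms(5) unfolding bowen_ball_eq_cylinder[OF assms(1-3)] by auto
    qed
    then have "(I, c, \<lambda>i. \<tau> (m i)) \<in> bowen_covers X \<alpha> K \<epsilon> N"
      using p \<tau>(1)[OF mL] unfolding pe cylinder_covers_def bowen_covers_def by auto
    moreover have "family_weight s (I, c, \<lambda>i. \<tau> (m i))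
        \<le> ennreal D * family_weight (s / (1 + \<alpha>)) (I, c, m)"
      by (rule family_weight_le) (use \<tau>(3) mL D in auto)
    ultimately show "\<exists>y\<in>bowen_covers X \<alpha> K \<epsilon> N. family_weight s y
        \<le> ennreal D * family_weight (s / (1 + \<alpha>)) p" unfolding pe by blast
  qed
qed

lemma bowenM_eq_SUP: "bowenM X \<alpha> K s \<epsilon> = (SUP N. bowenM_N X \<alpha> K s \<epsilon> N)"
proof -
  have "incseq (\<lambda>N. bowenM_N X \<alpha> K s \<epsilon> N)"
    unfolding bowenM_N_eq_INF bowen_covers_def by (intro monoI INF_superset_mono) auto
  then have "(\<lambda>N. bowenM_N X \<alpha> K s \<epsilon> N) \<longlonglongrightarrow> (SUP N. bowenM_N X \<alpha> K s \<epsilon> N)"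
    by (rule LIMSEQ_SUP)
  then show ?thesis unfolding bowenM_def by (rule limI)
qed

lemma bowenM_eq_0_iff_cylinder_content:
  assumes "0 < \<epsilon>" "\<epsilon> \<le> 1" "\<alpha> \<ge> 0" "s \<ge> 0" "K \<subseteq> X"
  shows "bowenM X \<alpha> K s \<epsilon> = 0 \<longleftrightarrow> (\<forall>L. cylinder_content X K (s / (1 + \<alpha>)) L = 0)"
  unfolding bowenM_eq_SUP bot_ennreal[symmetric] SUP_bot_conv unfolding bot_ennreal
  using bowenM_N_eq_0_imp_cylinder_content_eq_0[OF assms(1-4)]
    cylinder_content_eq_0_imp_bowenM_N_eq_0[OF assms] by blast

section \<open>Hausdorff dimension and \<open>\<alpha>\<close>-Bowen entropy\<close>

lemma sdist_le_sdiam: "x \<in> U \<Longrightarrow> y \<in> U \<Longrightarrow> sdist x y \<le> sdiam U"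
  unfolding sdiam_def by (auto intro!: cSup_upper bdd_aboveI[where M = 1] simp: sdist_def)

lemma sdiam_nonneg: "sdiam U \<ge> 0"
proof (cases "U = {}")
  case False
  then obtain x where "x \<in> U" by auto
  then show ?thesis using sdist_le_sdiam[of x U x] by (simp add: sdist_def)
qed (simp add: sdiam_def)

lemma sdiam_le:
  assumes "U \<noteq> {}" "\<And>x y. x \<in> U \<Longrightarrow> y \<in> U \<Longrightarrow> sdist x y \<le> d"
  shows "sdiam U \<le> d"
proof -
  have "{sdist x y |x y. x \<in> U \<and> y \<in> U} \<noteq> {}" using assms(1) by blast
  then have "Sup {sdist x y |x y. x \<in> U \<and> y \<in> U} \<le> d"
    by (rule cSup_least) (use assms(2) in auto)
  then show ?thesis unfolding sdiam_def using assms(1) by simp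
qed

lemma sdiam_cylinder_le: "sdiam (cylinder c m) \<le> exp (- real m)"
  by (rule sdiam_le) (auto simp: cylinder_def sdist_le_exp_iff)

lemma Lim_at_right_0_antimono:
  fixes f :: "real \<Rightarrow> 'a::{complete_linorder, linorder_topology}"
  assumes "\<And>x y. 0 < x \<Longrightarrow> x \<le> y \<Longrightarrow> f y \<le> f x"
  shows "Lim (at_right 0) f = (SUP x\<in>{0<..}. f x)"
proof (rule tendsto_Lim[OF trivial_limit_at_right_real], rule order_tendstoI)
  fix a assume "a < (SUP x\<in>{0<..}. f x)"
  then obtain x where x: "x > 0" "a < f x" by (auto simp: less_SUP_iff)
  show "eventually (\<lambda>y. a < f y) (at_right 0)"
    unfolding eventually_at_right_field
  proof (intro exI[of _ x] conjI allI impI)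
    fix y :: real assume "y > 0" "y < x"
    then show "a < f y" using x assms[of y x] by (auto intro: less_le_trans)
  qed fact
next
  fix a assume a: "(SUP x\<in>{0<..}. f x) < a"
  have "f y < a" if "y > 0" for y
    using that a by (meson SUP_upper greaterThan_iff le_less_trans)
  then show "eventually (\<lambda>y. f y < a) (at_right 0)"
    unfolding eventually_at_right_field by (intro exI[of _ 1]) auto
qed

lemma hausdorff_measure_eq_SUP: "hausdorff_measure t E = (SUP \<delta>\<in>{0<..}. hausdorff_pre t \<delta> E)"
  unfolding hausdorff_measure_def hausdorff_pre_def
  by (rule Lim_at_right_0_antimono) (auto intro!: INF_superset_mono intro: order_trans)

lemma hausdorff_pre_le_family_weight:
  assumes "t > 0" "exp (- real L) \<le> \<delta>" "p \<in> cylinder_covers X E L"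
  shows "hausdorff_pre t \<delta> E \<le> family_weight t p"
proof -
  obtain I c m where p: "p = (I, c, m)" by (cases p) auto
  define U where "U i = (if i \<in> I then cylinder (c i) (m i) else {})" for i
  have mL: "L \<le> m i" if "i \<in> I" for i using assms(3) that unfolding p cylinder_covers_def by auto
  have dU: "sdiam (U i) \<le> exp (- real (m i))" if "i \<in> I" for i
    using that sdiam_cylinder_le unfolding U_def by simp
  have "E \<subseteq> (\<Union>i. U i)" using assms(3) unfolding p cylinder_covers_def U_def by force
  moreover have "sdiam (U i) \<le> \<delta>" for i
  proof (cases "i \<in> I")
    case True
    then have "exp (- real (m i)) \<le> exp (- real L)" using mL by simp
    then show ?thesis using dU[OF True] assms(2) by linarith
  next
    case False
    have "0 \<le> \<delta>" using assms(2) exp_gt_zero[of "- real L"] by linarith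
    then show ?thesis using False by (simp add: U_def sdiam_def)
  qed
  ultimately have "hausdorff_pre t \<delta> E \<le> (\<Sum>i. ennreal (sdiam (U i) powr t))"
    unfolding hausdorff_pre_def by (intro INF_lower) auto
  also have "\<dots> \<le> family_weight t p"
    unfolding p family_weight_def prod.case
  proof (rule suminf_le[OF _ summableI summableI])
    fix i
    show "ennreal (sdiam (U i) powr t) \<le> (if i \<in> I then ennreal (exp (- t * real (m i))) else 0)"
    proof (cases "i \<in> I")
      case True
      have "sdiam (U i) powr t \<le> exp (- real (m i)) powr t"
        using dU[OF True] sdiam_nonneg assms(1) by (intro powr_mono2) auto
      also have "\<dots> = exp (- t * real (m i))" by (simp add: powr_def)
      finally show ?thesis using True by (simp add: ennreal_leI)
    qed (simp add: U_def sdiam_def)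
  qed
  finally show ?thesis .
qed

lemma cylinder_content_eq_0_imp_hausdorff_measure_eq_0:
  assumes "t > 0" "\<forall>L. cylinder_content X E t L = 0"
  shows "hausdorff_measure t E = 0"
proof -
  have "hausdorff_pre t \<delta> E = 0" if "\<delta> > 0" for \<delta>
  proof -
    define L where "L = nat \<lceil>- ln \<delta>\<rceil>"
    have "- ln \<delta> \<le> real L" unfolding L_def by (rule real_nat_ceiling_ge)
    then have "exp (- real L) \<le> exp (ln \<delta>)" by simp
    then have "exp (- real L) \<le> \<delta>" using that by simp
    then have "hausdorff_pre t \<delta> E \<le> cylinder_content X E t L"
      unfolding cylinder_content_def by (intro INF_greatest hausdorff_pre_le_family_weight assms(1))
    then show ?thesis using assms(2) by simp
  qed
  then show ?thesis unfolding hausdorff_measure_eq_SUP by simp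
qed

lemma subset_cylinder_if_sdiam_le:
  assumes "c \<in> U" "sdiam U \<le> exp (- real m)"
  shows "U \<subseteq> cylinder c m"
proof
  fix x assume "x \<in> U"
  then have "sdist x c \<le> exp (- real m)" using sdist_le_sdiam[OF _ assms(1)] assms(2) by (meson order_trans)
  then show "x \<in> cylinder c m" unfolding cylinder_def sdist_le_exp_iff by auto
qed

text \<open>The length is \<open>\<lfloor>-ln (diam U)\<rfloor>\<close> if \<open>diam U > 0\<close>; a set of diameter \<open>0\<close> is a point
  and lies in cylinders of every length.\<close>

lemma subset_cylinder_of_sdiam:
  assumes "c \<in> U" "sdiam U \<le> exp (- real L)" "t > 0" "\<eta> > 0"
  obtains m where "L \<le> m" "U \<subseteq> cylinder c m" "exp (- t * real m) \<le> exp t * sdiam U powr t + \<eta>"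
proof (cases "sdiam U > 0")
  case True
  define m where "m = nat \<lfloor>- ln (sdiam U)\<rfloor>"
  have "ln (sdiam U) \<le> - real L"
    using ln_le_cancel_iff[of "sdiam U" "exp (- real L)"] assms(2) True by simp
  then have "int L \<le> \<lfloor>- ln (sdiam U)\<rfloor>" by (simp add: le_floor_iff)
  then have m: "real m = of_int \<lfloor>- ln (sdiam U)\<rfloor>" "L \<le> m" unfolding m_def by auto
  have "real m \<le> - ln (sdiam U)" using m(1) by simp
  then have "exp (ln (sdiam U)) \<le> exp (- real m)" by simp
  then have "sdiam U \<le> exp (- real m)" using True by simp
  then show ?thesis
  proof (rule that[OF m(2) subset_cylinder_if_sdiam_le[OF assms(1)]])
    have "t * (- ln (sdiam U) - 1) \<le> t * real m"
      using m(1) assms(3) by (intro mult_left_mono) linarith+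
    then have "exp (- t * real m) \<le> exp (t + t * ln (sdiam U))" by (simp add: algebra_simps)
    also have "\<dots> = exp t * sdiam U powr t" using True by (simp add: powr_def exp_add mult.commute)
    finally show "exp (- t * real m) \<le> exp t * sdiam U powr t + \<eta>" using assms(4) by simp
  qed
next
  case False
  then have "sdiam U = 0" using sdiam_nonneg[of U] by simp
  define m where "m = max L (nat \<lceil>- ln \<eta> / t\<rceil>)"
  show ?thesis
  proof (rule that[OF _ subset_cylinder_if_sdiam_le[OF assms(1)]])
    show "L \<le> m" "sdiam U \<le> exp (- real m)" unfolding m_def using \<open>sdiam U = 0\<close> by auto
    have "- ln \<eta> / t \<le> real m" unfolding m_def using real_nat_ceiling_ge[of "- ln \<eta> / t"] by linarith
    then have "- ln \<eta> \<le> t * real m" by (metis assms(3) mult.commute pos_divide_le_eq)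
    then have "exp (- t * real m) \<le> exp (ln \<eta>)" by simp
    then show "exp (- t * real m) \<le> exp t * sdiam U powr t + \<eta>" using assms(4) \<open>sdiam U = 0\<close> by simp
  qed
qed

lemma ennreal_suminf_quarter_geometric: "e \<ge> 0 \<Longrightarrow> (\<Sum>i. ennreal (e / 2 ^ (i + 2))) = ennreal (e / 2)"
proof -
  assume e: "e \<ge> 0"
  have "(\<lambda>n. (e / 4) * (1/2::real) ^ n) sums ((e / 4) * (1 / (1 - 1/2)))"
    by (intro sums_mult geometric_sums) simp
  moreover have "(\<lambda>n. (e / 4) * (1/2::real) ^ n) = (\<lambda>i. e / 2 ^ (i + 2))"
    by (auto simp: power_add field_simps)
  ultimately have "(\<lambda>i. e / 2 ^ (i + 2)) sums (e / 2)" by simp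
  then show ?thesis using e by (intro suminf_ennreal_eq) auto
qed

lemma cylinder_cover_of_cover:
  assumes "E \<subseteq> X" "E \<subseteq> (\<Union>i. U i)" "\<And>i. sdiam (U i) \<le> exp (- real L)" "t > 0" "e > 0"
  obtains p where "p \<in> cylinder_covers X E L"
    "family_weight t p \<le> ennreal (exp t) * (\<Sum>i. ennreal (sdiam (U i) powr t)) + ennreal (e / 2)"
proof -
  define I where "I = {i. U i \<inter> E \<noteq> {}}"
  define c where "c i = (SOME x. x \<in> U i \<inter> E)" for i
  have c: "c i \<in> U i \<inter> E" if "i \<in> I" for i
  proof -
    have "\<exists>x. x \<in> U i \<inter> E" using that unfolding I_def by auto
    then show ?thesis unfolding c_def by (rule someI_ex)
  qed
  have "\<exists>m. L \<le> m \<and> U i \<subseteq> cylinder (c i) m \<and>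
      exp (- t * real m) \<le> exp t * sdiam (U i) powr t + e / 2 ^ (i + 2)" if i: "i \<in> I" for i
  proof -
    obtain m where "L \<le> m" "U i \<subseteq> cylinder (c i) m"
      "exp (- t * real m) \<le> exp t * sdiam (U i) powr t + e / 2 ^ (i + 2)"
      by (rule subset_cylinder_of_sdiam[of "c i" "U i" L t "e / 2 ^ (i + 2)"])
         (use c[OF i] assms(3-5) in auto)
    then show ?thesis by blast
  qed
  then obtain m where m: "\<forall>i\<in>I. L \<le> m i \<and> U i \<subseteq> cylinder (c i) (m i) \<and>
      exp (- t * real (m i)) \<le> exp t * sdiam (U i) powr t + e / 2 ^ (i + 2)"
    by metis
  have "E \<subseteq> (\<Union>i\<in>I. cylinder (c i) (m i))"
  proof
    fix x assume "x \<in> E"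
    then obtain i where "x \<in> U i" "i \<in> I" using assms(2) unfolding I_def by blast
    then show "x \<in> (\<Union>i\<in>I. cylinder (c i) (m i))" using m by blast
  qed
  then have cover: "(I, c, m) \<in> cylinder_covers X E L"
    using c m assms(1) unfolding cylinder_covers_def by auto
  have summand_le: "(if i \<in> I then ennreal (exp (- t * real (m i))) else 0)
      \<le> ennreal (exp t) * ennreal (sdiam (U i) powr t) + ennreal (e / 2 ^ (i + 2))" for i
  proof (cases "i \<in> I")
    case True
    have "exp t * sdiam (U i) powr t \<ge> 0" "e / 2 ^ (i + 2) \<ge> 0" using assms(5) by simp_all
    then show ?thesis using True m
      by (simp add: ennreal_mult[symmetric] ennreal_plus[symmetric] ennreal_leI del: ennreal_plus)
  qed simp
  have "family_weight t (I, c, m)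
      \<le> (\<Sum>i. ennreal (exp t) * ennreal (sdiam (U i) powr t) + ennreal (e / 2 ^ (i + 2)))"
    unfolding family_weight_def prod.case by (rule suminf_le[OF summand_le summableI summableI])
  also have "\<dots> = ennreal (exp t) * (\<Sum>i. ennreal (sdiam (U i) powr t)) + (\<Sum>i. ennreal (e / 2 ^ (i + 2)))"
    by (subst suminf_add[OF summableI summableI, symmetric]) simp
  also have "\<dots> = ennreal (exp t) * (\<Sum>i. ennreal (sdiam (U i) powr t)) + ennreal (e / 2)"
    using assms(5) by (simp only: ennreal_suminf_quarter_geometric)
  finally show ?thesis using that cover by blast
qed

lemma hausdorff_measure_eq_0_imp_cylinder_content_eq_0:
  assumes "E \<subseteq> X" "t > 0" "hausdorff_measure t E = 0"
  shows "cylinder_content X E t L = 0"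
  unfolding cylinder_content_def ennreal_INF_eq_0_iff
proof (intro allI impI)
  fix e :: real assume e: "e > 0"
  define e1 where "e1 = e / (2 * exp t)"
  have e1: "e1 > 0" using e unfolding e1_def by simp
  have "hausdorff_pre t (exp (- real L)) E \<le> hausdorff_measure t E"
    unfolding hausdorff_measure_eq_SUP by (intro SUP_upper) auto
  then have "hausdorff_pre t (exp (- real L)) E = 0" using assms(3) by simp
  then obtain U where U: "E \<subseteq> (\<Union>i. U i)" "\<And>i. sdiam (U i) \<le> exp (- real L)"
    and S: "(\<Sum>i. ennreal (sdiam (U i) powr t)) < ennreal e1"
    unfolding hausdorff_pre_def ennreal_INF_eq_0_iff using e1 by blast
  obtain p where p: "p \<in> cylinder_covers X E L"
    "family_weight t p \<le> ennreal (exp t) * (\<Sum>i. ennreal (sdiam (U i) powr t)) + ennreal (e / 2)"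
    by (rule cylinder_cover_of_cover[OF assms(1) U assms(2) e])
  obtain S' where S': "(\<Sum>i. ennreal (sdiam (U i) powr t)) = ennreal S'" "S' \<ge> 0" "S' < e1"
  proof (cases "(\<Sum>i. ennreal (sdiam (U i) powr t))" rule: ennreal_cases)
    case (real r) then show ?thesis using S that by (auto simp: ennreal_less_iff)
  next
    case top then show ?thesis using S by simp
  qed
  have "family_weight t p \<le> ennreal (exp t * S' + e / 2)"
    using p(2) S'(1,2) e by (simp add: ennreal_mult ennreal_plus)
  also have "\<dots> < ennreal e"
  proof (rule ennreal_lessI[OF e])
    have "exp t * S' < exp t * e1" using S'(3) by simp
    then show "exp t * S' + e / 2 < e" unfolding e1_def by simp
  qed
  finally show "\<exists>p\<in>cylinder_covers X E L. family_weight t p < ennreal e" using p(1) by blast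
qed

lemma hausdorff_measure_eq_0_iff_cylinder_content:
  assumes "E \<subseteq> X" "t > 0"
  shows "hausdorff_measure t E = 0 \<longleftrightarrow> (\<forall>L. cylinder_content X E t L = 0)"
  using hausdorff_measure_eq_0_imp_cylinder_content_eq_0[OF assms]
    cylinder_content_eq_0_imp_hausdorff_measure_eq_0[OF assms(2)] by blast

lemma hausdorff_dim_eq_Inf_cylinder_content:
  assumes "E \<subseteq> X"
  shows "hausdorff_dim E = Inf (ereal ` {t. 0 < t \<and> (\<forall>L. cylinder_content X E t L = 0)})"
proof -
  have "{ereal s |s. 0 < s \<and> hausdorff_measure s E = 0}
      = ereal ` {t. 0 < t \<and> (\<forall>L. cylinder_content X E t L = 0)}"
    using hausdorff_measure_eq_0_iff_cylinder_content[OF assms] by auto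
  then show ?thesis unfolding hausdorff_dim_def by simp
qed

lemma cylinder_content_empty: "cylinder_content X {} t L = 0"
proof -
  have "({}, \<lambda>i. undefined, \<lambda>i. L) \<in> cylinder_covers X {} L" unfolding cylinder_covers_def by auto
  then have "cylinder_content X {} t L \<le> family_weight t ({}, \<lambda>i. undefined, \<lambda>i. L)"
    unfolding cylinder_content_def by (rule INF_lower)
  then show ?thesis unfolding family_weight_def by simp
qed

lemma one_le_cylinder_content_0:
  assumes "K \<noteq> {}"
  shows "1 \<le> cylinder_content X K 0 0"
  unfolding cylinder_content_def
proof (rule INF_greatest)
  fix p assume p: "p \<in> cylinder_covers X K 0"
  obtain I c m where pe: "p = (I, c, m)" by (cases p) auto
  obtain i0 where i0: "i0 \<in> I" using p assms unfolding pe cylinder_covers_def by auto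
  have "(\<Sum>i\<in>{i0}. if i \<in> I then ennreal (exp (- 0 * real (m i))) else 0)
      \<le> (\<Sum>i. if i \<in> I then ennreal (exp (- 0 * real (m i))) else 0)"
    by (rule sum_le_suminf[OF summableI]) auto
  then show "1 \<le> family_weight 0 p" unfolding pe family_weight_def using i0 by simp
qed

lemma Inf_ereal_greaterThan_0: "Inf (ereal ` {0<..}) = 0"
proof -
  have "ereal (Inf {0<..}) = Inf (ereal ` {0::real<..})"
    by (rule ereal_Inf') (auto intro: bdd_belowI[where m = 0] exI[of _ 1])
  then show ?thesis by (simp add: zero_ereal_def)
qed

lemma Inf_ereal_atLeast_0: "Inf {ereal s |s. 0 \<le> s} = 0"
  by (rule antisym) (auto intro: Inf_lower Inf_greatest simp: zero_ereal_def)

lemma bowen_crit_eq_hausdorff_dim: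
  assumes "E \<subseteq> X" "0 < \<epsilon>" "\<epsilon> \<le> 1" "\<alpha> \<ge> 0"
  shows "bowen_crit X \<alpha> E \<epsilon> = ereal (1 + \<alpha>) * hausdorff_dim E"
proof -
  define Z where "Z = {t. 0 < t \<and> (\<forall>L. cylinder_content X E t L = 0)}"
  have dim: "hausdorff_dim E = Inf (ereal ` Z)"
    unfolding Z_def by (rule hausdorff_dim_eq_Inf_cylinder_content[OF assms(1)])
  have M0: "bowenM X \<alpha> E s \<epsilon> = 0 \<longleftrightarrow> (\<forall>L. cylinder_content X E (s / (1 + \<alpha>)) L = 0)"
    if "s \<ge> 0" for s
    by (rule bowenM_eq_0_iff_cylinder_content[OF assms(2-4) that assms(1)])
  have a1: "1 + \<alpha> > 0" using assms by simp
  show ?thesis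
  proof (cases "E = {}")
    case True
    then have "{ereal s |s. 0 \<le> s \<and> bowenM X \<alpha> E s \<epsilon> = 0} = {ereal s |s. 0 \<le> s}"
      using M0 cylinder_content_empty by auto
    moreover have "Z = {0<..}" unfolding Z_def using True cylinder_content_empty by auto
    ultimately show ?thesis
      unfolding bowen_crit_def dim by (simp add: Inf_ereal_atLeast_0 Inf_ereal_greaterThan_0)
  next
    case False
    have "{ereal s |s. 0 \<le> s \<and> bowenM X \<alpha> E s \<epsilon> = 0} = {ereal (1 + \<alpha>) * x |x. x \<in> ereal ` Z}"
    proof safe
      fix s :: real assume s: "0 \<le> s" "bowenM X \<alpha> E s \<epsilon> = 0"
      then have C: "\<forall>L. cylinder_content X E (s / (1 + \<alpha>)) L = 0" using M0 by blast
      then have "s \<noteq> 0" using one_le_cylinder_content_0[OF False, of X] by auto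
      then have "s / (1 + \<alpha>) \<in> Z" unfolding Z_def using C s a1 by auto
      moreover have "ereal s = ereal (1 + \<alpha>) * ereal (s / (1 + \<alpha>))" using a1 by simp
      ultimately show "\<exists>x. ereal s = ereal (1 + \<alpha>) * x \<and> x \<in> ereal ` Z" by blast
    next
      fix t assume t: "t \<in> Z"
      then have "(1 + \<alpha>) * t \<ge> 0" "(1 + \<alpha>) * t / (1 + \<alpha>) = t" using a1 unfolding Z_def by auto
      then show "\<exists>s. ereal (1 + \<alpha>) * ereal t = ereal s \<and> 0 \<le> s \<and> bowenM X \<alpha> E s \<epsilon> = 0"
        using M0 t unfolding Z_def by (intro exI[of _ "(1 + \<alpha>) * t"]) auto
    qed
    then show ?thesis
      unfolding bowen_crit_def dim using ereal_Inf_cmult[OF a1, of "\<lambda>x. x \<in> ereal ` Z"] by simp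
  qed
qed

lemma Lim_at_right_0_eventually_const:
  assumes "\<And>x::real. 0 < x \<Longrightarrow> x < 1 \<Longrightarrow> f x = c"
  shows "Lim (at_right 0) f = c"
proof (rule tendsto_Lim[OF trivial_limit_at_right_real])
  have "eventually (\<lambda>x. f x = c) (at_right 0)"
    unfolding eventually_at_right_field using assms by (intro exI[of _ 1]) auto
  then show "(f \<longlongrightarrow> c) (at_right 0)" by (rule tendsto_eventually)
qed

lemma bowen_entropy_eq_hausdorff_dim:
  assumes "E \<subseteq> X" "\<alpha> \<ge> 0"
  shows "bowen_entropy X \<alpha> E = ereal (1 + \<alpha>) * hausdorff_dim E"
  unfolding bowen_entropy_def
  by (rule Lim_at_right_0_eventually_const)
     (use bowen_crit_eq_hausdorff_dim[OF assms(1) _ _ assms(2)] in auto)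

lemma hausdorff_dim_eq_bowen_entropy_div:
  assumes "E \<subseteq> X" "\<alpha> \<ge> 0"
  shows "hausdorff_dim E = bowen_entropy X \<alpha> E / ereal (1 + \<alpha>)"
  unfolding bowen_entropy_eq_hausdorff_dim[OF assms] using assms(2)
  by (cases "hausdorff_dim E") (auto simp: divide_ereal_def)

section \<open>Words, compactness and a Kraft-type inequality\<close>

definition initial_word :: "nat \<Rightarrow> seq \<Rightarrow> nat list" where
  "initial_word L x = map x [0..<L]"

lemma length_initial_word [simp]: "length (initial_word L x) = L"
  by (simp add: initial_word_def)

lemma nth_initial_word [simp]: "j < L \<Longrightarrow> initial_word L x ! j = x j"
  by (simp add: initial_word_def)

lemma initial_word_eq_iff: "initial_word L x = initial_word L y \<longleftrightarrow> (\<forall>j<L. x j = y j)"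
  by (auto simp: initial_word_def)

lemma initial_word_eq_iff_cylinder: "initial_word L x = initial_word L y \<longleftrightarrow> x \<in> cylinder y L"
  by (auto simp: initial_word_eq_iff cylinder_def)

lemma initial_word_split:
  assumes "m \<le> L" "x \<in> cylinder c m"
  shows "initial_word L x = initial_word m c @ initial_word (L - m) (\<lambda>j. x (m + j))"
  by (rule nth_equalityI) (use assms in \<open>auto simp: nth_append cylinder_def\<close>)

lemma shifted_in_SFT: "x \<in> SFT k A \<Longrightarrow> (\<lambda>j. x (n + j)) \<in> SFT k A"
  unfolding SFT_def full_shift_def by auto

lemma finite_initial_words: "finite (initial_word L ` SFT k A)"
proof (rule finite_subset)
  show "initial_word L ` SFT k A \<subseteq> {w. set w \<subseteq> {..<k} \<and> length w = L}"
    unfolding SFT_def full_shift_def initial_word_def by auto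
qed (simp add: finite_lists_length_eq)

lemma open_cylinder: "open (cylinder c L)"
proof -
  have "open {y::seq. \<forall>j\<in>{..<L}. y (id j) \<in> {c j}}"
    by (rule product_topology_basis') (auto intro: open_discrete)
  moreover have "cylinder c L = {y. \<forall>j\<in>{..<L}. y (id j) \<in> {c j}}" by (auto simp: cylinder_def)
  ultimately show ?thesis by simp
qed

lemma open_if_cylinder_subset:
  assumes "\<And>x. x \<in> S \<Longrightarrow> cylinder x L \<subseteq> S"
  shows "open S"
proof -
  have "S = (\<Union>x\<in>S. cylinder x L)" using assms by (auto simp: cylinder_def)
  then show ?thesis by (metis open_UN open_cylinder)
qed

lemma compact_full_shift: "compact (full_shift k)"
proof -
  have "full_shift k = PiE UNIV (\<lambda>_. {..<k})" unfolding full_shift_def by (auto simp: PiE_def)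
  moreover have "compactin (product_topology (\<lambda>_. euclidean) UNIV) (PiE UNIV (\<lambda>_. {..<k::nat}))"
    by (simp add: compactin_PiE finite_imp_compact)
  ultimately show ?thesis by (simp add: euclidean_product_topology)
qed

lemma compact_SFT: "compact (SFT k A)"
proof -
  have "closed {x::seq. A $$ (x n, x (Suc n)) = 1}" for n
    unfolding closed_def Compl_eq
    by (rule open_if_cylinder_subset[where L = "Suc (Suc n)"]) (auto simp: cylinder_def)
  then have "closed (\<Inter>n. {x::seq. A $$ (x n, x (Suc n)) = 1})" by blast
  moreover have "SFT k A = full_shift k \<inter> (\<Inter>n. {x. A $$ (x n, x (Suc n)) = 1})"
    unfolding SFT_def by auto
  ultimately show ?thesis using compact_full_shift by (simp add: compact_Int_closed)
qed

lemma initial_words_subset_of_cylinder_cover: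
  assumes "SFT k A \<subseteq> (\<Union>i\<in>J. cylinder (c i) (m i))"
  shows "initial_word L ` SFT k A \<subseteq> (\<Union>i\<in>J. if L \<le> m i then {initial_word L (c i)}
           else (\<lambda>u. initial_word (m i) (c i) @ u) ` initial_word (L - m i) ` SFT k A)"
proof
  fix w assume "w \<in> initial_word L ` SFT k A"
  then obtain x where x: "x \<in> SFT k A" "w = initial_word L x" by auto
  then obtain i where i: "i \<in> J" "x \<in> cylinder (c i) (m i)" using assms by blast
  show "w \<in> (\<Union>i\<in>J. if L \<le> m i then {initial_word L (c i)}
           else (\<lambda>u. initial_word (m i) (c i) @ u) ` initial_word (L - m i) ` SFT k A)"
  proof (cases "L \<le> m i")
    case True
    then have "initial_word L x = initial_word L (c i)"
      using i(2) unfolding initial_word_eq_iff cylinder_def by auto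
    then show ?thesis using i True x by auto
  next
    case False
    have "initial_word L x = initial_word (m i) (c i) @ initial_word (L - m i) (\<lambda>j. x (m i + j))"
      using False i(2) by (intro initial_word_split) auto
    moreover have "(\<lambda>j. x (m i + j)) \<in> SFT k A" using x(1) by (rule shifted_in_SFT)
    ultimately show ?thesis using i False x by auto
  qed
qed

text \<open>A Kraft-type inequality, by induction on \<open>L\<close>: a word of length \<open>L\<close> is a prefix of a
  centre or continues a shorter word past one of the cylinders.\<close>

lemma card_initial_words_le_of_cylinder_cover:
  assumes "finite J" "SFT k A \<subseteq> (\<Union>i\<in>J. cylinder (c i) (m i))" "\<forall>i\<in>J. 1 \<le> m i \<and> m i \<le> M"
    "(\<Sum>i\<in>J. exp (- t * real (m i))) \<le> 1" "t \<ge> 0"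
  shows "real (card (initial_word L ` SFT k A)) \<le> exp (t * (real M + real L))"
proof (induction L rule: less_induct)
  case (less L)
  define X where "X = SFT k A"
  define g where "g i = (if L \<le> m i then {initial_word L (c i)}
      else (\<lambda>u. initial_word (m i) (c i) @ u) ` initial_word (L - m i) ` X)" for i
  have sub: "initial_word L ` X \<subseteq> (\<Union>i\<in>J. g i)"
    using initial_words_subset_of_cylinder_cover[OF assms(2)] unfolding g_def X_def .
  have "card (initial_word L ` X) \<le> card (\<Union>i\<in>J. g i)"
    using sub assms(1) unfolding g_def X_def by (intro card_mono) (auto simp: finite_initial_words)
  also have "\<dots> \<le> (\<Sum>i\<in>J. card (g i))" by (rule card_UN_le[OF assms(1)])
  finally have "real (card (initial_word L ` X)) \<le> (\<Sum>i\<in>J. real (card (g i)))"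
    by (metis of_nat_le_iff of_nat_sum)
  also have "\<dots> \<le> (\<Sum>i\<in>J. exp (t * (real M + real L)) * exp (- t * real (m i)))"
  proof (rule sum_mono)
    fix i assume i: "i \<in> J"
    then have m: "1 \<le> m i" "m i \<le> M" using assms(3) by auto
    have split: "exp (t * (real M + real L - real (m i))) = exp (t * (real M + real L)) * exp (- t * real (m i))"
      by (simp add: exp_add[symmetric] algebra_simps)
    show "real (card (g i)) \<le> exp (t * (real M + real L)) * exp (- t * real (m i))"
    proof (cases "L \<le> m i")
      case True
      have "0 \<le> t * (real M + real L - real (m i))" using m assms(5) by simp
      then show ?thesis using True unfolding g_def split[symmetric] by simp
    next
      case False
      have "card (g i) \<le> card (initial_word (L - m i) ` X)"
        unfolding g_def X_def using False by (simp add: card_image_le finite_initial_words)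
      also have "real \<dots> \<le> exp (t * (real M + real (L - m i)))"
        unfolding X_def using m False by (intro less.IH) auto
      finally show ?thesis using False unfolding split[symmetric] by (simp add: add_diff_eq)
    qed
  qed
  also have "\<dots> \<le> exp (t * (real M + real L))"
    using assms(4) by (simp add: sum_distrib_left[symmetric] mult_left_le)
  finally show ?case unfolding X_def .
qed

lemma cylinder_content_le_card_initial_words:
  assumes "L \<le> N"
  shows "cylinder_content (SFT k A) (SFT k A) t L
           \<le> ennreal (real (card (initial_word N ` SFT k A)) * exp (- t * real N))"
proof -
  define X where "X = SFT k A"
  define F where "F = initial_word N ` X"
  have "finite F" unfolding F_def X_def by (rule finite_initial_words)
  then obtain h where h: "bij_betw h {..<card F} F"
    using ex_bij_betw_nat_finite lessThan_atLeast0 by metis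
  define rep where "rep w = (SOME x. x \<in> X \<and> initial_word N x = w)" for w
  have rep: "rep w \<in> X \<and> initial_word N (rep w) = w" if "w \<in> F" for w
    unfolding rep_def by (rule someI_ex[of "\<lambda>x. x \<in> X \<and> initial_word N x = w"]) (use that F_def in auto)
  define p where "p = ({..<card F}, \<lambda>i. rep (h i), \<lambda>i::nat. N)"
  have "X \<subseteq> (\<Union>i<card F. cylinder (rep (h i)) N)"
  proof
    fix x assume "x \<in> X"
    then have x: "initial_word N x \<in> F" unfolding F_def by auto
    then obtain i where i: "i < card F" "h i = initial_word N x"
      using h by (metis bij_betw_imp_surj_on imageE lessThan_iff)
    then have "initial_word N x = initial_word N (rep (h i))" using rep[OF x] by simp
    then show "x \<in> (\<Union>i<card F. cylinder (rep (h i)) N)"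
      using i(1) by (auto simp: initial_word_eq_iff_cylinder)
  qed
  then have "p \<in> cylinder_covers X X L"
    using rep h assms unfolding p_def cylinder_covers_def by (auto dest: bij_betwE)
  then have "cylinder_content X X t L \<le> family_weight t p"
    unfolding cylinder_content_def by (rule INF_lower)
  also have "family_weight t p = (\<Sum>i<card F. ennreal (exp (- t * real N)))"
    unfolding p_def family_weight_def prod.case by (subst suminf_finite[of "{..<card F}"]) auto
  also have "\<dots> = ennreal (real (card F) * exp (- t * real N))"
    by (subst sum_ennreal) auto
  finally show ?thesis unfolding F_def X_def .
qed

lemma span_num_eq_card_initial_words:
  assumes "0 < \<epsilon>" "\<epsilon> \<le> 1" "\<alpha> \<ge> 0"
  shows "span_num (SFT k A) \<alpha> n \<epsilon> = card (initial_word (bowen_length \<alpha> \<epsilon> n) ` SFT k A)"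
proof -
  define X where "X = SFT k A"
  define l where "l = bowen_length \<alpha> \<epsilon> n"
  have spanning_iff: "spanning X \<alpha> n \<epsilon> E \<longleftrightarrow> E \<subseteq> X \<and> initial_word l ` X \<subseteq> initial_word l ` E" for E
    unfolding spanning_def bowen_dist_less_iff[OF assms] initial_word_eq_iff[symmetric] l_def
    by (auto simp: eq_commute image_iff)
  have lower: "card (initial_word l ` X) \<le> card E" if "finite E" "spanning X \<alpha> n \<epsilon> E" for E
    using that card_mono[OF finite_imageI[OF that(1)]] card_image_le[OF that(1)]
    unfolding spanning_iff by (meson order_trans)
  define rep where "rep w = (SOME x. x \<in> X \<and> initial_word l x = w)" for w
  have rep: "rep w \<in> X \<and> initial_word l (rep w) = w" if "w \<in> initial_word l ` X" for w
    unfolding rep_def by (rule someI_ex[of "\<lambda>x. x \<in> X \<and> initial_word l x = w"]) (use that in auto)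
  define E where "E = rep ` initial_word l ` X"
  have fin: "finite E" unfolding E_def X_def using finite_initial_words by blast
  have span: "spanning X \<alpha> n \<epsilon> E"
    unfolding spanning_iff E_def using rep by (force simp: image_image)
  have "card E \<le> card (initial_word l ` X)"
    unfolding E_def X_def using finite_initial_words by (rule card_image_le)
  then have "card E = card (initial_word l ` X)" using lower[OF fin span] by simp
  then have "span_num X \<alpha> n \<epsilon> = card (initial_word l ` X)"
    unfolding span_num_def
  proof (intro cInf_eq_minimum)
    show "card (initial_word l ` X) \<in> {card E |E. finite E \<and> spanning X \<alpha> n \<epsilon> E}"
      using fin span \<open>card E = card (initial_word l ` X)\<close> by force
  qed (use lower in auto)
  then show ?thesis unfolding X_def l_def .
qed

section \<open>Powers of a matrix and its spectral radius\<close>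

interpretation of_nat_hom: semiring_hom "of_nat :: nat \<Rightarrow> 'a::semiring_1"
  by unfold_locales auto

lemma smult_pow_mat:
  fixes c :: "'a::comm_ring_1"
  assumes "M \<in> carrier_mat n n"
  shows "(c \<cdot>\<^sub>m M) ^\<^sub>m L = (c ^ L) \<cdot>\<^sub>m (M ^\<^sub>m L)"
proof (induction L)
  case 0 then show ?case using assms by (auto intro!: eq_matI)
next
  case (Suc L)
  have "(c \<cdot>\<^sub>m M) ^\<^sub>m Suc L = ((c ^ L) \<cdot>\<^sub>m (M ^\<^sub>m L)) * (c \<cdot>\<^sub>m M)" using Suc by simp
  also have "\<dots> = (c ^ L) \<cdot>\<^sub>m ((M ^\<^sub>m L) * (c \<cdot>\<^sub>m M))"
    using assms by (intro mult_smult_assoc_mat) auto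
  also have "\<dots> = (c ^ L) \<cdot>\<^sub>m (c \<cdot>\<^sub>m ((M ^\<^sub>m L) * M))"
    using assms by (subst mult_smult_distrib) auto
  also have "\<dots> = (c ^ Suc L) \<cdot>\<^sub>m (M ^\<^sub>m Suc L)"
    by (rule eq_matI) (auto simp: mult.assoc)
  finally show ?case .
qed

lemma spectral_radius_smult_le:
  fixes M :: "complex mat"
  assumes M: "M \<in> carrier_mat n n" and "0 < n" "0 < s"
  shows "spectral_radius (complex_of_real s \<cdot>\<^sub>m M) \<le> s * spectral_radius M"
proof -
  define c where "c = complex_of_real s"
  have c0: "c \<noteq> 0" using assms unfolding c_def by simp
  have B: "c \<cdot>\<^sub>m M \<in> carrier_mat n n" using M by simp
  obtain \<mu> where \<mu>: "\<mu> \<in> spectrum (c \<cdot>\<^sub>m M)" "spectral_radius (c \<cdot>\<^sub>m M) = norm \<mu>"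
    using spectral_radius_mem_max(1)[OF B assms(2)] by auto
  then obtain v where v: "v \<in> carrier_vec n" "v \<noteq> 0\<^sub>v n" "(c \<cdot>\<^sub>m M) *\<^sub>v v = \<mu> \<cdot>\<^sub>v v"
    using B unfolding spectrum_def eigenvalue_def eigenvector_def by auto
  have cMv: "(c \<cdot>\<^sub>m M) *\<^sub>v v = c \<cdot>\<^sub>v (M *\<^sub>v v)"
    using M v(1) by (intro eq_vecI) (auto simp: scalar_prod_def sum_distrib_left mult.assoc intro!: sum.cong)
  have "M *\<^sub>v v = (\<mu> / c) \<cdot>\<^sub>v v"
  proof (rule eq_vecI)
    fix i assume "i < dim_vec ((\<mu> / c) \<cdot>\<^sub>v v)"
    then have i: "i < n" using v by simp
    have "c * (M *\<^sub>v v) $ i = ((c \<cdot>\<^sub>m M) *\<^sub>v v) $ i" unfolding cMv using i M by simp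
    also have "\<dots> = \<mu> * v $ i" unfolding v(3) using i v by simp
    finally have "c * (M *\<^sub>v v) $ i = \<mu> * v $ i" .
    then show "(M *\<^sub>v v) $ i = ((\<mu> / c) \<cdot>\<^sub>v v) $ i" using c0 i v by (simp add: field_simps)
  qed (use v M in auto)
  then have "\<mu> / c \<in> spectrum M"
    using v M unfolding spectrum_def eigenvalue_def eigenvector_def by auto
  then have "norm (\<mu> / c) \<le> spectral_radius M"
    by (intro spectral_radius_mem_max(2)[OF M assms(2)]) auto
  then show ?thesis using \<mu>(2) assms(3) unfolding c_def by (simp add: norm_divide field_simps)
qed

lemma norm_smult_pow_mat_entry:
  fixes M :: "complex mat"
  assumes "M \<in> carrier_mat n n" "0 < s" "i < n" "j < n"
  shows "norm (((complex_of_real s \<cdot>\<^sub>m M) ^\<^sub>m L) $$ (i, j)) = s ^ L * norm ((M ^\<^sub>m L) $$ (i, j))"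
  using assms by (simp add: smult_pow_mat norm_mult norm_power)

text \<open>Both bounds come from the Jordan normal form of the rescaled matrix \<open>s M\<close>.\<close>

lemma scaled_power_entries_bounded:
  fixes M :: "complex mat"
  assumes M: "M \<in> carrier_mat n n" and "0 < n" "0 < s" "s * spectral_radius M < 1"
  obtains c where "\<And>L i j. i < n \<Longrightarrow> j < n \<Longrightarrow> s ^ L * norm ((M ^\<^sub>m L) $$ (i, j)) \<le> c"
proof -
  have B: "complex_of_real s \<cdot>\<^sub>m M \<in> carrier_mat n n" using M by simp
  have "spectral_radius (complex_of_real s \<cdot>\<^sub>m M) < 1"
    using spectral_radius_smult_le[OF assms(1-3)] assms(4) by simp
  from spectral_radius_jnf_norm_bound_less_1_upper_triangular[OF B this]
  obtain c where c: "\<And>L. norm_bound ((complex_of_real s \<cdot>\<^sub>m M) ^\<^sub>m L) c" by auto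
  have "s ^ L * norm ((M ^\<^sub>m L) $$ (i, j)) \<le> c" (is "_ \<le> ?b L") if "i < n" "j < n" for L i j
  proof -
    have "(complex_of_real s \<cdot>\<^sub>m M) ^\<^sub>m L \<in> carrier_mat n n" by (rule pow_carrier_mat[OF B])
    then have "norm (((complex_of_real s \<cdot>\<^sub>m M) ^\<^sub>m L) $$ (i, j)) \<le> ?b L"
      using c[of L] that unfolding norm_bound_def carrier_mat_def by auto
    then show ?thesis using norm_smult_pow_mat_entry[OF M assms(3) that] by simp
  qed
  then show ?thesis using that by blast
qed

lemma scaled_power_entries_polynomially_bounded:
  fixes M :: "complex mat"
  assumes M: "M \<in> carrier_mat n n" and "0 < n" "0 < s" "s * spectral_radius M \<le> 1"
  obtains c1 c2 where
    "\<And>L i j. i < n \<Longrightarrow> j < n \<Longrightarrow> s ^ L * norm ((M ^\<^sub>m L) $$ (i, j)) \<le> c1 + c2 * real L ^ (n - 1)"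
proof -
  have B: "complex_of_real s \<cdot>\<^sub>m M \<in> carrier_mat n n" using M by simp
  have "spectral_radius (complex_of_real s \<cdot>\<^sub>m M) \<le> 1"
    using spectral_radius_smult_le[OF assms(1-3)] assms(4) by simp
  from spectral_radius_jnf_norm_bound_le_1_upper_triangular[OF B this]
  obtain c1 c2 where c: "\<And>L. norm_bound ((complex_of_real s \<cdot>\<^sub>m M) ^\<^sub>m L) (c1 + c2 * real L ^ (n - 1))"
    by auto
  have "s ^ L * norm ((M ^\<^sub>m L) $$ (i, j)) \<le> c1 + c2 * real L ^ (n - 1)" (is "_ \<le> ?b L")
    if "i < n" "j < n" for L i j
  proof -
    have "(complex_of_real s \<cdot>\<^sub>m M) ^\<^sub>m L \<in> carrier_mat n n" by (rule pow_carrier_mat[OF B])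
    then have "norm (((complex_of_real s \<cdot>\<^sub>m M) ^\<^sub>m L) $$ (i, j)) \<le> ?b L"
      using c[of L] that unfolding norm_bound_def carrier_mat_def by auto
    then show ?thesis using norm_smult_pow_mat_entry[OF M assms(3) that] by simp
  qed
  then show ?thesis using that by blast
qed

text \<open>Evaluating \<open>M\<^sup>L v = \<mu>\<^sup>L v\<close> at a coordinate where the eigenvector \<open>v\<close> is largest.\<close>

lemma spectral_radius_power_le_row_sum:
  fixes M :: "complex mat"
  assumes M: "M \<in> carrier_mat n n" and "0 < n"
  obtains i where "i < n" "spectral_radius M ^ L \<le> (\<Sum>j<n. norm ((M ^\<^sub>m L) $$ (i, j)))"
proof -
  obtain \<mu> where \<mu>: "\<mu> \<in> spectrum M" "spectral_radius M = norm \<mu>"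
    using spectral_radius_mem_max(1)[OF M assms(2)] by auto
  then obtain v where ev: "eigenvector M v \<mu>" unfolding spectrum_def eigenvalue_def by auto
  then have v: "v \<in> carrier_vec n" "v \<noteq> 0\<^sub>v n" using M unfolding eigenvector_def by auto
  define m where "m = Max ((\<lambda>i. norm (v $ i)) ` {..<n})"
  have "m \<in> (\<lambda>i. norm (v $ i)) ` {..<n}" unfolding m_def using assms(2) by (intro Max_in) auto
  then obtain i where i: "i < n" "norm (v $ i) = m" by auto
  have m_ge: "norm (v $ j) \<le> m" if "j < n" for j unfolding m_def using that by (intro Max_ge) auto
  have "m > 0"
  proof (rule ccontr)
    assume "\<not> m > 0"
    then have "v $ j = 0" if "j < n" for j
      using m_ge[OF that] by (metis norm_le_zero_iff not_less order.trans)
    then have "v = 0\<^sub>v n" using v by (intro eq_vecI) auto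
    then show False using v by simp
  qed
  have "\<mu> ^ L * v $ i = (M ^\<^sub>m L *\<^sub>v v) $ i" using eigenvector_pow[OF M ev] i v by simp
  also have "\<dots> = (\<Sum>j<n. (M ^\<^sub>m L) $$ (i, j) * v $ j)"
    using i M v by (simp add: scalar_prod_def atLeast0LessThan)
  finally have eq: "\<mu> ^ L * v $ i = (\<Sum>j<n. (M ^\<^sub>m L) $$ (i, j) * v $ j)" .
  have "spectral_radius M ^ L * m = norm (\<mu> ^ L * v $ i)" using \<mu>(2) i(2) by (simp add: norm_mult norm_power)
  also have "\<dots> \<le> (\<Sum>j<n. norm ((M ^\<^sub>m L) $$ (i, j)) * norm (v $ j))"
    unfolding eq by (rule order.trans[OF norm_sum]) (simp add: norm_mult)
  also have "\<dots> \<le> (\<Sum>j<n. norm ((M ^\<^sub>m L) $$ (i, j)) * m)" using m_ge by (intro sum_mono mult_left_mono) auto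
  also have "\<dots> = (\<Sum>j<n. norm ((M ^\<^sub>m L) $$ (i, j))) * m" by (simp add: sum_distrib_right)
  finally have "spectral_radius M ^ L \<le> (\<Sum>j<n. norm ((M ^\<^sub>m L) $$ (i, j)))"
    using \<open>m > 0\<close> by simp
  then show ?thesis using that[OF i(1)] by blast
qed

section \<open>Counting admissible words\<close>

locale sft =
  fixes k :: nat and A :: "nat mat"
  assumes k_pos: "k \<ge> 1"
    and A_carrier: "A \<in> carrier_mat k k"
    and A_01: "\<forall>i<k. \<forall>j<k. A $$ (i, j) \<in> {0, 1}"
    and A_row: "\<forall>i<k. \<exists>j<k. A $$ (i, j) = 1"
begin

abbreviation "X \<equiv> SFT k A"

definition admissible :: "nat list \<Rightarrow> bool" where
  "admissible w \<longleftrightarrow> set w \<subseteq> {..<k} \<and> (\<forall>i. Suc i < length w \<longrightarrow> A $$ (w ! i, w ! Suc i) = 1)"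

definition follower :: "nat \<Rightarrow> nat" where
  "follower a = (SOME b. b < k \<and> A $$ (a, b) = 1)"

lemma follower_spec: "a < k \<Longrightarrow> follower a < k \<and> A $$ (a, follower a) = 1"
  unfolding follower_def by (rule someI_ex) (use A_row in auto)

lemma funpow_follower_less: "a < k \<Longrightarrow> (follower ^^ n) a < k"
  by (induction n) (auto simp: follower_spec)

lemma admissible_less: "admissible w \<Longrightarrow> a \<in> set w \<Longrightarrow> a < k"
  unfolding admissible_def by auto

lemma admissible_hd_last_less: "admissible w \<Longrightarrow> w \<noteq> [] \<Longrightarrow> hd w < k \<and> last w < k"
  by (simp add: admissible_less)

definition extension :: "nat list \<Rightarrow> seq" where
  "extension w j = (if j < length w then w ! j else (follower ^^ (j - (length w - 1))) (last w))"

lemma extends_to_SFT: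
  assumes "admissible w" "w \<noteq> []"
  shows "extension w \<in> X" "initial_word (length w) (extension w) = w"
proof -
  let ?L = "length w"
  have lw: "last w < k" using admissible_less[OF assms(1)] assms(2) by simp
  have val: "extension w j < k" for j
    using admissible_less[OF assms(1), of "w ! j"] funpow_follower_less[OF lw]
    unfolding extension_def by auto
  have "A $$ (extension w j, extension w (Suc j)) = 1" for j
  proof -
    consider "Suc j < ?L" | "Suc j = ?L" | "Suc j > ?L" by linarith
    then show ?thesis
    proof cases
      case 1 then show ?thesis using assms unfolding extension_def admissible_def by auto
    next
      case 2
      then have j: "j = ?L - 1" by simp
      have "extension w j = last w" using assms(2) 2 unfolding extension_def j by (simp add: last_conv_nth)
      moreover have "extension w (Suc j) = follower (last w)" using 2 unfolding extension_def by simp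
      ultimately show ?thesis using follower_spec[OF lw] by simp
    next
      case 3
      then have "Suc j - (?L - 1) = Suc (j - (?L - 1))" using assms by (cases w) auto
      then have "extension w (Suc j) = follower (extension w j)" using 3 unfolding extension_def by simp
      then show ?thesis using follower_spec[OF val[of j]] by simp
    qed
  qed
  then show "extension w \<in> X" unfolding SFT_def full_shift_def using val by auto
  show "initial_word (length w) (extension w) = w"
    by (rule nth_equalityI) (auto simp: extension_def)
qed

lemma initial_words_SFT: "initial_word L ` X = {w. length w = L \<and> admissible w}"
proof
  show "initial_word L ` X \<subseteq> {w. length w = L \<and> admissible w}"
    unfolding SFT_def full_shift_def admissible_def initial_word_def by auto
  show "{w. length w = L \<and> admissible w} \<subseteq> initial_word L ` X"
  proof safe
    fix w assume w: "admissible w" "L = length w"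
    show "w \<in> initial_word (length w) ` X"
    proof (cases "w = []")
      case True
      have "admissible [0]" unfolding admissible_def using k_pos by auto
      then show ?thesis using True extends_to_SFT(1)[of "[0]"] by (auto simp: initial_word_def)
    next
      case False
      then show ?thesis using extends_to_SFT[OF w(1) False] by (auto intro!: image_eqI[of _ _ "extension w"])
    qed
  qed
qed

lemma admissible_snoc: "admissible (u @ [j]) \<longleftrightarrow> admissible u \<and> j < k \<and> (u \<noteq> [] \<longrightarrow> A $$ (last u, j) = 1)"
proof
  assume H: "admissible (u @ [j])"
  have s: "set u \<subseteq> {..<k}" "j < k" using H unfolding admissible_def by auto
  have t: "A $$ (u ! i, u ! Suc i) = 1" if "Suc i < length u" for i
  proof -
    have "A $$ ((u @ [j]) ! i, (u @ [j]) ! Suc i) = 1" using H that unfolding admissible_def by auto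
    then show ?thesis using that by (simp add: nth_append)
  qed
  have l: "A $$ (last u, j) = 1" if "u \<noteq> []"
  proof -
    define i where "i = length u - 1"
    have i: "Suc i = length u" using that unfolding i_def by (cases u) auto
    have lt: "Suc i < length (u @ [j])" using i by simp
    have h1: "A $$ ((u @ [j]) ! i, (u @ [j]) ! Suc i) = 1" using H lt unfolding admissible_def by blast
    have i2: "length u - Suc 0 = i" using i by simp
    have h2: "(u @ [j]) ! i = last u" using i that i2 by (simp add: nth_append last_conv_nth)
    have h3: "(u @ [j]) ! Suc i = j" using i by (simp add: nth_append)
    show ?thesis using h1 h2 h3 by simp
  qed
  show "admissible u \<and> j < k \<and> (u \<noteq> [] \<longrightarrow> A $$ (last u, j) = 1)"
    using s t l unfolding admissible_def by auto
next
  assume H: "admissible u \<and> j < k \<and> (u \<noteq> [] \<longrightarrow> A $$ (last u, j) = 1)"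
  have "A $$ ((u @ [j]) ! i, (u @ [j]) ! Suc i) = 1" if "Suc i < length (u @ [j])" for i
  proof (cases "Suc i < length u")
    case True then show ?thesis using H unfolding admissible_def by (simp add: nth_append)
  next
    case False
    then have i: "Suc i = length u" using that by simp
    then have "u \<noteq> []" by auto
    moreover have i2: "length u - Suc 0 = i" using i by simp
    moreover have "(u @ [j]) ! i = last u" using i \<open>u \<noteq> []\<close> i2 by (simp add: nth_append last_conv_nth)
    moreover have "(u @ [j]) ! Suc i = j" using i by (simp add: nth_append)
    ultimately show ?thesis using H by simp
  qed
  then show "admissible (u @ [j])" using H unfolding admissible_def by auto
qed

text \<open>Admissible words of length \<open>L + 1\<close> from \<open>i\<close> to \<open>j\<close> are the walks of length \<open>L\<close> in the
  graph of \<open>A\<close>.\<close>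

definition walks :: "nat \<Rightarrow> nat \<Rightarrow> nat \<Rightarrow> nat list set" where
  "walks L i j = {w. length w = Suc L \<and> admissible w \<and> hd w = i \<and> last w = j}"

lemma finite_walks: "finite (walks L i j)"
  by (rule finite_subset[OF _ finite_initial_words[of "Suc L" k A]])
     (auto simp: walks_def initial_words_SFT)

lemma walks_Suc:
  assumes "j < k"
  shows "walks (Suc L) i j = (\<Union>l\<in>{l. l < k \<and> A $$ (l, j) = 1}. (\<lambda>w. w @ [j]) ` walks L i l)"
proof safe
  fix w assume w: "w \<in> walks (Suc L) i j"
  define u where "u = butlast w"
  have "w \<noteq> []" using w unfolding walks_def by auto
  then have wu: "w = u @ [j]" using w unfolding u_def walks_def by auto
  have lu: "length u = Suc L" using w unfolding u_def walks_def by auto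
  have "admissible (u @ [j])" using w unfolding wu walks_def by simp
  then have au: "admissible u" "A $$ (last u, j) = 1" using lu by (auto simp: admissible_snoc)
  have "u \<noteq> []" using lu by auto
  then have "last u < k" using admissible_hd_last_less[OF au(1)] by simp
  moreover have "u \<in> walks L i (last u)" using w lu au \<open>u \<noteq> []\<close> unfolding walks_def wu by auto
  ultimately show "w \<in> (\<Union>l\<in>{l. l < k \<and> A $$ (l, j) = 1}. (\<lambda>w. w @ [j]) ` walks L i l)"
    using au(2) unfolding wu by auto
next
  fix l u assume lu: "l < k" "A $$ (l, j) = 1" "u \<in> walks L i l"
  then have "u \<noteq> []" by (auto simp: walks_def)
  then show "u @ [j] \<in> walks (Suc L) i j"
    using lu assms by (auto simp: walks_def admissible_snoc)
qed

lemma card_walks: "i < k \<Longrightarrow> j < k \<Longrightarrow> card (walks L i j) = (A ^\<^sub>m L) $$ (i, j)"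
proof (induction L arbitrary: j)
  case 0
  then have "walks 0 i j = (if i = j then {[i]} else {})"
    unfolding walks_def admissible_def by (auto simp: length_Suc_conv)
  then show ?case using 0 A_carrier by simp
next
  case (Suc L)
  let ?S = "{l. l < k \<and> A $$ (l, j) = 1}"
  have "card (walks (Suc L) i j) = (\<Sum>l\<in>?S. card ((\<lambda>w. w @ [j]) ` walks L i l))"
    unfolding walks_Suc[OF Suc.prems(2)]
    by (rule card_UN_disjoint) (simp, simp add: finite_walks, auto simp: walks_def)
  also have "\<dots> = (\<Sum>l\<in>?S. (A ^\<^sub>m L) $$ (i, l))"
    using Suc by (intro sum.cong refl) (simp add: card_image inj_on_def)
  also have "\<dots> = (\<Sum>l<k. if A $$ (l, j) = 1 then (A ^\<^sub>m L) $$ (i, l) else 0)"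
  proof -
    have "?S = {l \<in> {..<k}. A $$ (l, j) = 1}" by auto
    then show ?thesis by (simp only: sum.inter_filter[OF finite_lessThan])
  qed
  also have "\<dots> = (\<Sum>l<k. (A ^\<^sub>m L) $$ (i, l) * A $$ (l, j))"
  proof (rule sum.cong)
    fix l assume "l \<in> {..<k}"
    then have "A $$ (l, j) \<in> {0, 1}" using A_01 Suc.prems by auto
    then show "(if A $$ (l, j) = 1 then (A ^\<^sub>m L) $$ (i, l) else 0) = (A ^\<^sub>m L) $$ (i, l) * A $$ (l, j)"
      by auto
  qed simp
  also have "\<dots> = (A ^\<^sub>m Suc L) $$ (i, j)"
    using Suc.prems A_carrier by (simp add: scalar_prod_def atLeast0LessThan)
  finally show ?case .
qed

lemma card_initial_words_Suc: "card (initial_word (Suc L) ` X) = (\<Sum>i<k. \<Sum>j<k. (A ^\<^sub>m L) $$ (i, j))"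
proof -
  have "initial_word (Suc L) ` X = (\<Union>i<k. \<Union>j<k. walks L i j)"
    unfolding initial_words_SFT using admissible_hd_last_less
    by (auto simp: walks_def simp flip: length_greater_0_conv)
  also have "card \<dots> = (\<Sum>i<k. card (\<Union>j<k. walks L i j))"
    by (rule card_UN_disjoint) (simp, simp add: finite_walks, auto simp: walks_def)
  also have "\<dots> = (\<Sum>i<k. \<Sum>j<k. card (walks L i j))"
    by (intro sum.cong refl card_UN_disjoint) (simp, simp add: finite_walks, auto simp: walks_def)
  finally show ?thesis by (simp add: card_walks)
qed

lemma one_le_row_sum_power: "i < k \<Longrightarrow> 1 \<le> (\<Sum>j<k. (A ^\<^sub>m L) $$ (i, j))"
proof -
  assume i: "i < k"
  define w where "w = initial_word (Suc L) (extension [i])"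
  have "admissible [i]" using i unfolding admissible_def by auto
  then have "w \<in> initial_word (Suc L) ` X" unfolding w_def using extends_to_SFT(1) by blast
  then have w: "length w = Suc L" "admissible w" unfolding initial_words_SFT by auto
  then have "w \<noteq> []" by auto
  then have "hd w = w ! 0" by (rule hd_conv_nth)
  also have "\<dots> = i" unfolding w_def by (simp add: extension_def)
  finally have "w \<in> walks L i (last w)" "last w < k"
    using w admissible_hd_last_less[OF w(2) \<open>w \<noteq> []\<close>] unfolding walks_def by auto
  then have "card (walks L i (last w)) \<noteq> 0" using finite_walks by auto
  then have "1 \<le> (A ^\<^sub>m L) $$ (i, last w)" using card_walks i \<open>last w < k\<close> by simp
  also have "\<dots> \<le> (\<Sum>j<k. (A ^\<^sub>m L) $$ (i, j))" using \<open>last w < k\<close> by (intro member_le_sum) auto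
  finally show ?thesis .
qed

definition \<rho> :: real where
  "\<rho> = spectral_radius (map_mat of_nat A)"

lemma norm_power_entry:
  "i < k \<Longrightarrow> j < k \<Longrightarrow> norm ((map_mat of_nat A ^\<^sub>m L) $$ (i, j) :: complex) = real ((A ^\<^sub>m L) $$ (i, j))"
  using A_carrier by (simp flip: of_nat_hom.mat_hom_pow)

lemma one_le_\<rho>: "1 \<le> \<rho>"
proof (rule ccontr)
  assume "\<not> 1 \<le> \<rho>"
  have \<rho>0: "0 \<le> \<rho>"
    using spectral_radius_mem_max(1)[of "map_mat of_nat A" k] A_carrier k_pos unfolding \<rho>_def by auto
  define s where "s = 2 / (1 + \<rho>)"
  have s: "1 < s" "s * \<rho> < 1" using \<open>\<not> 1 \<le> \<rho>\<close> \<rho>0 unfolding s_def by (simp_all add: field_simps)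
  obtain c where c: "\<And>L i j. i < k \<Longrightarrow> j < k \<Longrightarrow> s ^ L * real ((A ^\<^sub>m L) $$ (i, j)) \<le> c"
    using scaled_power_entries_bounded[of "map_mat of_nat A" k s] A_carrier k_pos s
    unfolding \<rho>_def by (auto simp: norm_power_entry)
  have "s ^ L \<le> real k * c" for L
  proof -
    have "s ^ L \<le> s ^ L * real (\<Sum>j<k. (A ^\<^sub>m L) $$ (0, j))"
      using one_le_row_sum_power[of 0 L] k_pos s by (simp del: of_nat_sum)
    also have "\<dots> = (\<Sum>j<k. s ^ L * real ((A ^\<^sub>m L) $$ (0, j)))" by (simp add: sum_distrib_left)
    also have "\<dots> \<le> real k * c" using c[of 0] k_pos sum_mono[of "{..<k}" _ "\<lambda>_. c"] by simp
    finally show ?thesis .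
  qed
  moreover obtain L where "real k * c < s ^ L" using real_arch_pow[OF s(1)] by auto
  ultimately show False by (meson not_le)
qed

lemma \<rho>_power_le_card_initial_words: "\<rho> ^ L \<le> real (card (initial_word (Suc L) ` X))"
proof -
  obtain i where i: "i < k" "\<rho> ^ L \<le> (\<Sum>j<k. norm ((map_mat of_nat A ^\<^sub>m L) $$ (i, j) :: complex))"
    unfolding \<rho>_def
    by (rule spectral_radius_power_le_row_sum[of "map_mat of_nat A" k]) (use A_carrier k_pos in auto)
  have "(\<Sum>j<k. norm ((map_mat of_nat A ^\<^sub>m L) $$ (i, j) :: complex)) = (\<Sum>j<k. real ((A ^\<^sub>m L) $$ (i, j)))"
    using i(1) by (intro sum.cong refl norm_power_entry) auto
  then have "\<rho> ^ L \<le> real (\<Sum>j<k. (A ^\<^sub>m L) $$ (i, j))" using i(2) by simp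
  also have "(\<Sum>j<k. (A ^\<^sub>m L) $$ (i, j)) \<le> (\<Sum>i<k. \<Sum>j<k. (A ^\<^sub>m L) $$ (i, j))"
    using i(1) by (intro member_le_sum) auto
  finally show ?thesis unfolding card_initial_words_Suc by simp
qed

lemma card_initial_words_le:
  obtains C where "C \<ge> 0" "\<And>L. real (card (initial_word (Suc L) ` X)) \<le> C * (1 + real L) ^ (k - 1) * \<rho> ^ L"
proof -
  have \<rho>0: "\<rho> > 0" using one_le_\<rho> by simp
  obtain c1 c2 where c: "\<And>L i j. i < k \<Longrightarrow> j < k \<Longrightarrow>
      (1 / \<rho>) ^ L * real ((A ^\<^sub>m L) $$ (i, j)) \<le> c1 + c2 * real L ^ (k - 1)"
    using scaled_power_entries_polynomially_bounded[of "map_mat of_nat A" k "1 / \<rho>"] A_carrier k_pos \<rho>0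
    unfolding \<rho>_def by (auto simp: norm_power_entry)
  define C where "C = real k * real k * (\<bar>c1\<bar> + \<bar>c2\<bar>)"
  have entry: "real ((A ^\<^sub>m L) $$ (i, j)) \<le> (\<bar>c1\<bar> + \<bar>c2\<bar>) * (1 + real L) ^ (k - 1) * \<rho> ^ L"
    if "i < k" "j < k" for L i j
  proof -
    define P where "P = (1 + real L) ^ (k - 1)"
    have P: "1 \<le> P" "real L ^ (k - 1) \<le> P" unfolding P_def by (auto intro: power_mono)
    have "c1 \<le> \<bar>c1\<bar> * P" using mult_left_mono[OF P(1), of "\<bar>c1\<bar>"] by linarith
    moreover have "c2 * real L ^ (k - 1) \<le> \<bar>c2\<bar> * P"
      using mult_right_mono[OF abs_ge_self[of c2], of "real L ^ (k - 1)"] mult_left_mono[OF P(2), of "\<bar>c2\<bar>"]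
      by simp
    ultimately have "(1 / \<rho>) ^ L * real ((A ^\<^sub>m L) $$ (i, j)) \<le> (\<bar>c1\<bar> + \<bar>c2\<bar>) * P"
      using c[OF that, of L] by (simp add: distrib_right)
    then have "\<rho> ^ L * ((1 / \<rho>) ^ L * real ((A ^\<^sub>m L) $$ (i, j))) \<le> \<rho> ^ L * ((\<bar>c1\<bar> + \<bar>c2\<bar>) * P)"
      using \<rho>0 by (intro mult_left_mono) auto
    then show ?thesis using \<rho>0 unfolding P_def by (simp add: power_one_over mult_ac)
  qed
  have "real (card (initial_word (Suc L) ` X)) \<le> C * (1 + real L) ^ (k - 1) * \<rho> ^ L" for L
  proof -
    have "real (card (initial_word (Suc L) ` X)) = (\<Sum>i<k. \<Sum>j<k. real ((A ^\<^sub>m L) $$ (i, j)))"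
      unfolding card_initial_words_Suc by simp
    also have "\<dots> \<le> (\<Sum>i<k. \<Sum>j<k. (\<bar>c1\<bar> + \<bar>c2\<bar>) * (1 + real L) ^ (k - 1) * \<rho> ^ L)"
      using entry by (intro sum_mono) auto
    finally show ?thesis unfolding C_def by simp
  qed
  moreover have "C \<ge> 0" unfolding C_def by simp
  ultimately show ?thesis using that by blast
qed

lemma \<rho>_power_eq_exp: "\<rho> ^ n = exp (real n * ln \<rho>)"
  using one_le_\<rho> by (simp add: exp_of_nat_mult)

section \<open>Dimension and \<open>\<alpha>\<close>-entropy of \<open>\<Sigma>\<^sub>A\<^sup>+\<close>\<close>

lemma cylinder_content_SFT_eq_0:
  assumes "ln \<rho> < t"
  shows "cylinder_content X X t L = 0"
proof -
  obtain C where C: "C \<ge> 0" "\<And>n. real (card (initial_word (Suc n) ` X)) \<le> C * (1 + real n) ^ (k - 1) * \<rho> ^ n"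
    using card_initial_words_le by blast
  define g where "g n = C * (1 + real n) ^ (k - 1) * exp (- (t - ln \<rho>) * (1 + real n))" for n
  have g: "g \<longlonglongrightarrow> 0" unfolding g_def using assms by real_asymp
  have bound: "real (card (initial_word (Suc n) ` X)) * exp (- t * real (Suc n)) \<le> g n" for n
  proof -
    have "\<rho> ^ n * exp (- t * real (Suc n)) = exp (- (t - ln \<rho>) * (1 + real n) - ln \<rho>)"
      unfolding \<rho>_power_eq_exp by (simp add: exp_add[symmetric] algebra_simps)
    also have "\<dots> \<le> exp (- (t - ln \<rho>) * (1 + real n))" using one_le_\<rho> by simp
    finally have e: "\<rho> ^ n * exp (- t * real (Suc n)) \<le> exp (- (t - ln \<rho>) * (1 + real n))" .
    have "real (card (initial_word (Suc n) ` X)) * exp (- t * real (Suc n))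
        \<le> C * (1 + real n) ^ (k - 1) * \<rho> ^ n * exp (- t * real (Suc n))"
      by (intro mult_right_mono C(2)) simp
    also have "\<dots> = C * (1 + real n) ^ (k - 1) * (\<rho> ^ n * exp (- t * real (Suc n)))" by simp
    also have "\<dots> \<le> g n" unfolding g_def using e C(1) by (intro mult_left_mono) auto
    finally show ?thesis .
  qed
  have "cylinder_content X X t L \<le> 0"
  proof (rule ennreal_le_epsilon)
    fix e :: real assume "0 < e"
    then obtain N where N: "\<forall>n\<ge>N. g n < e" using order_tendstoD(2)[OF g] by (auto simp: eventually_sequentially)
    have "cylinder_content X X t L
        \<le> ennreal (real (card (initial_word (Suc (max L N)) ` X)) * exp (- t * real (Suc (max L N))))"
      by (rule cylinder_content_le_card_initial_words) simp
    also have "\<dots> \<le> ennreal (g (max L N))" using bound by (rule ennreal_leI)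
    also have "\<dots> \<le> ennreal e" using N by (intro ennreal_leI) (simp add: less_imp_le)
    finally show "cylinder_content X X t L \<le> 0 + ennreal e" by simp
  qed
  then show ?thesis by simp
qed

text \<open>If \<open>t < ln \<rho>\<close>, a finite cover of \<open>\<Sigma>\<^sub>A\<^sup>+\<close> by cylinders of total weight below \<open>1\<close> would
  by the Kraft-type inequality bound the number of words of length \<open>L\<close> by \<open>e\<^sup>t\<^sup>(\<^sup>M\<^sup>+\<^sup>L\<^sup>)\<close>,
  contradicting the growth \<open>\<rho>\<^sup>L\<close>.\<close>

lemma one_le_weight_of_finite_cylinder_cover:
  assumes "finite J" "X \<subseteq> (\<Union>i\<in>J. cylinder (c i) (m i))" "0 \<le> t" "t < ln \<rho>"
  shows "1 \<le> (\<Sum>i\<in>J. exp (- t * real (m i)))"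
proof (rule ccontr)
  define S where "S = (\<Sum>i\<in>J. exp (- t * real (m i)))"
  assume "\<not> 1 \<le> (\<Sum>i\<in>J. exp (- t * real (m i)))"
  then have S1: "S < 1" unfolding S_def by simp
  have m1: "1 \<le> m i" if "i \<in> J" for i
  proof (rule ccontr)
    assume "\<not> 1 \<le> m i"
    then have "m i = 0" by simp
    then have "1 \<le> S" unfolding S_def using member_le_sum[OF that, of "\<lambda>i. exp (- t * real (m i))"] assms(1)
      by simp
    then show False using S1 by simp
  qed
  define M where "M = (\<Sum>i\<in>J. m i)"
  have mM: "\<forall>i\<in>J. 1 \<le> m i \<and> m i \<le> M"
    using m1 assms(1) unfolding M_def by (auto intro!: member_le_sum)
  have "real L * ln \<rho> \<le> t * (real M + real L + 1)" for L
  proof -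
    have "real (card (initial_word (Suc L) ` X)) \<le> exp (t * (real M + real (Suc L)))"
      by (rule card_initial_words_le_of_cylinder_cover[OF assms(1,2) mM])
         (use S1 assms(3) in \<open>simp_all add: S_def\<close>)
    then have "exp (real L * ln \<rho>) \<le> exp (t * (real M + real (Suc L)))"
      using \<rho>_power_le_card_initial_words[of L] unfolding \<rho>_power_eq_exp by linarith
    then show ?thesis by (simp add: algebra_simps)
  qed
  note ineq = this
  define L where "L = nat \<lceil>t * (real M + 1) / (ln \<rho> - t)\<rceil> + 1"
  then have "t * (real M + 1) / (ln \<rho> - t) < real L" by linarith
  then have "t * (real M + 1) < real L * (ln \<rho> - t)" using assms(4) by (simp add: divide_less_eq)
  then show False using ineq[of L] by (simp add: algebra_simps)
qed

lemma one_le_cylinder_content_SFT: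
  assumes "0 \<le> t" "t < ln \<rho>"
  shows "1 \<le> cylinder_content X X t 0"
  unfolding cylinder_content_def
proof (rule INF_greatest)
  fix p assume p: "p \<in> cylinder_covers X X 0"
  obtain I c m where pe: "p = (I, c, m)" by (cases p) auto
  have cover: "X \<subseteq> (\<Union>i\<in>I. cylinder (c i) (m i))" using p unfolding pe cylinder_covers_def by auto
  obtain J where J: "J \<subseteq> I" "finite J" "X \<subseteq> (\<Union>i\<in>J. cylinder (c i) (m i))"
    by (rule compactE_image[OF compact_SFT open_cylinder cover])
  have "ennreal 1 \<le> ennreal (\<Sum>i\<in>J. exp (- t * real (m i)))"
    using one_le_weight_of_finite_cylinder_cover[OF J(2,3) assms] by (rule ennreal_leI)
  also have "\<dots> = (\<Sum>i\<in>J. ennreal (exp (- t * real (m i))))" by (rule sum_ennreal[symmetric]) simp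
  also have "\<dots> = (\<Sum>i\<in>J. if i \<in> I then ennreal (exp (- t * real (m i))) else 0)"
    using J(1) by (intro sum.cong) auto
  also have "\<dots> \<le> family_weight t p"
    unfolding pe family_weight_def prod.case by (rule sum_le_suminf[OF summableI J(2)]) auto
  finally show "1 \<le> family_weight t p" by simp
qed

lemma hausdorff_dim_SFT: "hausdorff_dim X = ereal (ln \<rho>)"
proof -
  define Z where "Z = {t. 0 < t \<and> (\<forall>L. cylinder_content X X t L = 0)}"
  have "ln \<rho> \<ge> 0" using one_le_\<rho> by simp
  then have Z_upper: "t \<in> Z" if "t > ln \<rho>" for t
    using that cylinder_content_SFT_eq_0 unfolding Z_def by auto
  have Z_lower: "ln \<rho> \<le> t" if "t \<in> Z" for t
  proof (rule ccontr)
    assume "\<not> ln \<rho> \<le> t"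
    then have "1 \<le> cylinder_content X X t 0" using that unfolding Z_def by (intro one_le_cylinder_content_SFT) auto
    then show False using that unfolding Z_def by simp
  qed
  have "Inf (ereal ` Z) = ereal (ln \<rho>)"
  proof (rule antisym)
    show "Inf (ereal ` Z) \<le> ereal (ln \<rho>)"
    proof (rule ereal_le_epsilon2)
      fix e :: real assume "e > 0"
      then show "Inf (ereal ` Z) \<le> ereal (ln \<rho>) + ereal e"
        using Z_upper[of "ln \<rho> + e"] by (intro Inf_lower2[of "ereal (ln \<rho> + e)"]) auto
    qed
    show "ereal (ln \<rho>) \<le> Inf (ereal ` Z)" by (rule Inf_greatest) (auto dest: Z_lower)
  qed
  then show ?thesis unfolding Z_def hausdorff_dim_eq_Inf_cylinder_content[OF subset_refl] .
qed

lemma ln_card_initial_words_tendsto: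
  "(\<lambda>l. ln (real (card (initial_word l ` X))) / real l) \<longlonglongrightarrow> ln \<rho>"
proof -
  obtain C where C: "C \<ge> 0" "\<And>n. real (card (initial_word (Suc n) ` X)) \<le> C * (1 + real n) ^ (k - 1) * \<rho> ^ n"
    using card_initial_words_le by blast
  have bounds: "real (l - 1) * ln \<rho> \<le> ln (real (card (initial_word l ` X)))"
    "ln (real (card (initial_word l ` X))) \<le> ln C + real (k - 1) * ln (real l) + real (l - 1) * ln \<rho>"
    if "l \<ge> 1" for l
  proof -
    have l: "Suc (l - 1) = l" using that by simp
    have low: "exp (real (l - 1) * ln \<rho>) \<le> real (card (initial_word l ` X))"
      using \<rho>_power_le_card_initial_words[of "l - 1"] unfolding \<rho>_power_eq_exp l .
    have pos: "0 < real (card (initial_word l ` X))" using less_le_trans[OF exp_gt_zero low] .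
    show "real (l - 1) * ln \<rho> \<le> ln (real (card (initial_word l ` X)))"
      using ln_le_cancel_iff[OF exp_gt_zero pos] low by simp
    have up: "real (card (initial_word l ` X)) \<le> C * real l ^ (k - 1) * exp (real (l - 1) * ln \<rho>)"
      using C(2)[of "l - 1"] that unfolding \<rho>_power_eq_exp l by (simp add: of_nat_diff)
    then have "C \<noteq> 0" using pos by auto
    then have "C > 0" using C(1) by simp
    have "ln (real (card (initial_word l ` X))) \<le> ln (C * real l ^ (k - 1) * exp (real (l - 1) * ln \<rho>))"
      using ln_le_cancel_iff[OF pos less_le_trans[OF pos up]] up by simp
    also have "\<dots> = ln C + real (k - 1) * ln (real l) + real (l - 1) * ln \<rho>"
      using \<open>C > 0\<close> that by (simp add: ln_mult ln_realpow)
    finally show "ln (real (card (initial_word l ` X))) \<le> ln C + real (k - 1) * ln (real l) + real (l - 1) * ln \<rho>" .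
  qed
  show ?thesis
  proof (rule tendsto_sandwich)
    show "eventually (\<lambda>l. (real l - 1) * ln \<rho> / real l \<le> ln (real (card (initial_word l ` X))) / real l) sequentially"
      using bounds(1) by (intro eventually_sequentiallyI[of 1] divide_right_mono) (auto simp: of_nat_diff)
    show "eventually (\<lambda>l. ln (real (card (initial_word l ` X))) / real l
        \<le> (ln C + real (k - 1) * ln (real l) + (real l - 1) * ln \<rho>) / real l) sequentially"
      using bounds(2) by (intro eventually_sequentiallyI[of 1] divide_right_mono) (auto simp: of_nat_diff)
    show "(\<lambda>l. (real l - 1) * ln \<rho> / real l) \<longlonglongrightarrow> ln \<rho>" by real_asymp
    show "(\<lambda>l. (ln C + real (k - 1) * ln (real l) + (real l - 1) * ln \<rho>) / real l) \<longlonglongrightarrow> ln \<rho>"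
      by real_asymp
  qed
qed

lemma alpha_entropy_SFT:
  assumes "\<alpha> \<ge> 0"
  shows "alpha_entropy X \<alpha> = ereal ((1 + \<alpha>) * ln \<rho>)"
  unfolding alpha_entropy_def
proof (rule Lim_at_right_0_eventually_const)
  fix \<epsilon> :: real assume \<epsilon>: "0 < \<epsilon>" "\<epsilon> < 1"
  let ?l = "bowen_length \<alpha> \<epsilon>"
  have "(\<lambda>n. ln (real (card (initial_word (?l n) ` X))) / real (?l n) * (real (?l n) / real n))
      \<longlonglongrightarrow> ln \<rho> * (1 + \<alpha>)"
    using \<epsilon> assms by (intro tendsto_mult filterlim_compose[OF ln_card_initial_words_tendsto]
        bowen_length_at_top bowen_length_div_tendsto) auto
  moreover have "eventually (\<lambda>n. ln (real (card (initial_word (?l n) ` X))) / real (?l n) * (real (?l n) / real n)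
      = ln (real (span_num X \<alpha> n \<epsilon>)) / real n) sequentially"
  proof (rule eventually_sequentiallyI[of 1])
    fix n :: nat assume "1 \<le> n"
    then have "real (?l n) > 0" using bowen_length_ge[of n \<alpha> \<epsilon>] by simp
    then show "ln (real (card (initial_word (?l n) ` X))) / real (?l n) * (real (?l n) / real n)
        = ln (real (span_num X \<alpha> n \<epsilon>)) / real n"
      using span_num_eq_card_initial_words[of \<epsilon> \<alpha> k A n] \<epsilon> assms by simp
  qed
  ultimately have "(\<lambda>n. ereal (ln (real (span_num X \<alpha> n \<epsilon>)) / real n)) \<longlonglongrightarrow> ereal ((1 + \<alpha>) * ln \<rho>)"
    by (intro tendsto_ereal) (auto simp: mult.commute elim: Lim_transform_eventually)
  then show "limsup (\<lambda>n. ereal (ln (real (span_num X \<alpha> n \<epsilon>)) / real n)) = ereal ((1 + \<alpha>) * ln \<rho>)"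
    by (simp add: lim_imp_Limsup)
qed

end

theorem theorem1p4:
  fixes k :: nat and A :: "nat mat" and \<alpha> :: real
  assumes "k \<ge> 1"
    and "A \<in> carrier_mat k k"
    and "\<forall>i<k. \<forall>j<k. A $$ (i, j) \<in> {0, 1}"
    and "\<forall>i<k. \<exists>j<k. A $$ (i, j) = 1"
    and "\<alpha> \<ge> 0"
  shows "(\<forall>E. E \<subseteq> SFT k A \<longrightarrow>
            hausdorff_dim E = bowen_entropy (SFT k A) \<alpha> E / ereal (1 + \<alpha>))
       \<and> bowen_entropy (SFT k A) \<alpha> (SFT k A) = alpha_entropy (SFT k A) \<alpha>
       \<and> alpha_entropy (SFT k A) \<alpha> =
            ereal ((1 + \<alpha>) * ln (spectral_radius (map_mat of_nat A)))
       \<and> hausdorff_dim (SFT k A) = ereal (ln (spectral_radius (map_mat of_nat A)))"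
proof -
  interpret sft k A using assms(1-4) by unfold_locales
  have "bowen_entropy X \<alpha> X = ereal ((1 + \<alpha>) * ln \<rho>)"
    using bowen_entropy_eq_hausdorff_dim[OF subset_refl assms(5)] hausdorff_dim_SFT by simp
  then show ?thesis
    using hausdorff_dim_eq_bowen_entropy_div[OF _ assms(5)] alpha_entropy_SFT[OF assms(5)] hausdorff_dim_SFT
    unfolding \<rho>_def by simp
qed

end
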